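(* Let $\Lambda$ be an isolated set of a partial flow $\phi$ on a metric space $X$. Let $N$ be an isolating neighborhood of $\Lambda$ and $\mathcal L_1\colon N\to\mathbb{R}$ a catenary function for $\Lambda$. Let $\delta>0$ be such that $\mathcal B=\{x\in N:\mathcal L_1(x)\le\delta\}$ is contained in the interior of $N$, and let $\partial\mathcal B$ denote the boundary of $\mathcal B$. Let $a\colon\mathcal B\setminus\Lambda\to(0,\infty)$ be continuous with $\dot a=0$ and $\inf a>0$, and let $f\colon\partial\mathcal B\to\mathbb{R}$ be continuous. Then there is a unique continuous function $\mathcal L_2\colon\mathcal B\to\mathbb{R}$ such that: - $\mathcal L_2(\Lambda)=0$; - $\ddot{\mathcal L}_2(x)=a(x)^2\mathcal L_2(x)$ for all $x\in\mathcal B\setminus\Lambda$; - $\mathcal L_2(x)=f(x)$ for all $x\in\partial\mathcal B$. If in addition $f>0$, then $\mathcal L_2(x)>0$ for all $x\in\mathcal B\setminus\Lambda$.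
   Context: A partial flow on a metric space $X$ is a continuous map $\phi\colon\Gamma\to X$ on an open set $\Gamma\subset\mathbb{R}\times X$. Here $\Gamma_x=\{t:(t,x)\in\Gamma\}$ is a connected set containing $0$, $\Gamma_{\phi_t(x)}=\Gamma_x-t$, $\phi_0=\mathrm{id}$, and $\phi_s\phi_t=\phi_{s+t}$ where defined. A $\phi$-invariant set $\Lambda$ is isolated if it has a compact neighborhood $N$ (an isolating neighborhood) such that $\phi_{\Gamma_x}(x)\subseteq N$ implies $x\in\Lambda$. $\dot{\mathcal L}(x)=\lim_{t\to0}(\mathcal L(\phi_t(x))-\mathcal L(x))/t$ and $\ddot{\mathcal L}=(\dot{\mathcal L})^{\cdot}$. A catenary function for $\Lambda$ is a continuous $\mathcal L\colon N\to\mathbb{R}$ on an isolating neighborhood $N$ with $\mathcal L(\Lambda)=0$, $\mathcal L>0$ on $N\setminus\Lambda$, and $\ddot{\mathcal L}=\mathcal L$ on $N$. *)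

theory Defs
  imports "HOL-Analysis.Analysis"
begin

text \<open>The metric space X is the type 'a. A partial flow is given by its domain
  Gamma (a subset of R x X) and the map phi, curried as phi t x; values of phi
  outside Gamma are irrelevant.\<close>

definition flow_dom :: "(real \<times> 'a) set \<Rightarrow> 'a \<Rightarrow> real set" where
  "flow_dom \<Gamma> x = {t. (t, x) \<in> \<Gamma>}"

definition partial_flow :: "(real \<times> 'a::metric_space) set \<Rightarrow> (real \<Rightarrow> 'a \<Rightarrow> 'a) \<Rightarrow> bool" where
  "partial_flow \<Gamma> \<phi> \<longleftrightarrow>
     open \<Gamma> \<and>
     continuous_on \<Gamma> (\<lambda>(t, x). \<phi> t x) \<and>
     (\<forall>x. connected (flow_dom \<Gamma> x) \<and> 0 \<in> flow_dom \<Gamma> x) \<and>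
     (\<forall>x t. t \<in> flow_dom \<Gamma> x \<longrightarrow> flow_dom \<Gamma> (\<phi> t x) = (\<lambda>s. s - t) ` flow_dom \<Gamma> x) \<and>
     (\<forall>x. \<phi> 0 x = x) \<and>
     (\<forall>x s t. t \<in> flow_dom \<Gamma> x \<longrightarrow> s \<in> flow_dom \<Gamma> (\<phi> t x) \<longrightarrow> \<phi> s (\<phi> t x) = \<phi> (s + t) x)"

definition flow_invariant :: "(real \<times> 'a) set \<Rightarrow> (real \<Rightarrow> 'a \<Rightarrow> 'a) \<Rightarrow> 'a set \<Rightarrow> bool" where
  "flow_invariant \<Gamma> \<phi> \<Lambda> \<longleftrightarrow> (\<forall>x\<in>\<Lambda>. \<forall>t\<in>flow_dom \<Gamma> x. \<phi> t x \<in> \<Lambda>)"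

definition isolating_nbhd :: "(real \<times> 'a::metric_space) set \<Rightarrow> (real \<Rightarrow> 'a \<Rightarrow> 'a) \<Rightarrow> 'a set \<Rightarrow> 'a set \<Rightarrow> bool" where
  "isolating_nbhd \<Gamma> \<phi> \<Lambda> N \<longleftrightarrow>
     compact N \<and> \<Lambda> \<subseteq> interior N \<and>
     (\<forall>x. (\<lambda>t. \<phi> t x) ` flow_dom \<Gamma> x \<subseteq> N \<longrightarrow> x \<in> \<Lambda>)"

definition isolated_set :: "(real \<times> 'a::metric_space) set \<Rightarrow> (real \<Rightarrow> 'a \<Rightarrow> 'a) \<Rightarrow> 'a set \<Rightarrow> bool" where
  "isolated_set \<Gamma> \<phi> \<Lambda> \<longleftrightarrow> flow_invariant \<Gamma> \<phi> \<Lambda> \<and> (\<exists>N. isolating_nbhd \<Gamma> \<phi> \<Lambda> N)"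

definition has_lie_deriv :: "(real \<times> 'a) set \<Rightarrow> (real \<Rightarrow> 'a \<Rightarrow> 'a) \<Rightarrow> 'a set \<Rightarrow> ('a \<Rightarrow> real) \<Rightarrow> 'a \<Rightarrow> real \<Rightarrow> bool" where
  "has_lie_deriv \<Gamma> \<phi> D L x l \<longleftrightarrow>
     ((\<lambda>t. (L (\<phi> t x) - L x) / t) \<longlongrightarrow> l) (at 0 within {t. (t, x) \<in> \<Gamma> \<and> \<phi> t x \<in> D})"

definition second_lie_deriv_eq :: "(real \<times> 'a) set \<Rightarrow> (real \<Rightarrow> 'a \<Rightarrow> 'a) \<Rightarrow> 'a set \<Rightarrow> ('a \<Rightarrow> real) \<Rightarrow> ('a \<Rightarrow> real) \<Rightarrow> bool" where
  "second_lie_deriv_eq \<Gamma> \<phi> D L g \<longleftrightarrow>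
     (\<exists>L'. (\<forall>x\<in>D. has_lie_deriv \<Gamma> \<phi> D L x (L' x)) \<and> (\<forall>x\<in>D. has_lie_deriv \<Gamma> \<phi> D L' x (g x)))"

definition catenary :: "(real \<times> 'a::metric_space) set \<Rightarrow> (real \<Rightarrow> 'a \<Rightarrow> 'a) \<Rightarrow> 'a set \<Rightarrow> 'a set \<Rightarrow> ('a \<Rightarrow> real) \<Rightarrow> bool" where
  "catenary \<Gamma> \<phi> \<Lambda> N L \<longleftrightarrow>
     isolating_nbhd \<Gamma> \<phi> \<Lambda> N \<and>
     continuous_on N L \<and>
     (\<forall>x\<in>\<Lambda>. L x = 0) \<and>
     (\<forall>x\<in>N - \<Lambda>. L x > 0) \<and>
     second_lie_deriv_eq \<Gamma> \<phi> N L L"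

end

theory Submission
  imports Defs
begin

text \<open>Along an orbit the catenary equation integrates to
  \<open>L1 (\<phi>\<^sub>t y) = L1 y cosh t + L1' y sinh t\<close>, so every orbit through the sublevel set
  \<open>B = {L1 \<le> \<delta>}\<close> outside \<open>\<Lambda>\<close> either leaves \<open>B\<close> through its boundary \<open>{L1 = \<delta>}\<close>
  after an explicit time \<open>\<tau>\<^sub>\<pm>\<close> in each direction, or (when \<open>L1 \<pm> L1' = 0\<close>) tends to \<open>\<Lambda>\<close>.
  As \<open>a\<close> is constant along orbits, the equation \<open>u'' = a\<^sup>2 u\<close> along an orbit is solved by
  \<open>\<alpha> e\<^sup>a\<^sup>t + \<beta> e\<^sup>-\<^sup>a\<^sup>t\<close>, and \<open>\<alpha>, \<beta>\<close> are fixed by the values of \<open>f\<close> at the two exit points;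
  the weights \<open>e\<^sup>-\<^sup>a\<^sup>\<tau>\<^sup>\<pm>\<close> of these values are bounded by \<open>(2 L1/\<delta>)\<^sup>c\<close> with \<open>c > 0\<close> a lower bound of \<open>a\<close>,
  which gives continuity at \<open>\<Lambda>\<close>. Uniqueness is a maximum principle: at a positive
  interior maximum of the difference of two solutions the second derivative along the
  orbit is \<open>a\<^sup>2 \<cdot> (difference) > 0\<close>. Positivity is read off the explicit formula.\<close>

section \<open>Partial flows\<close>

lemma partial_flowD:
  assumes "partial_flow \<Gamma> \<phi>"
  shows "open \<Gamma>" "continuous_on \<Gamma> (\<lambda>(t, x). \<phi> t x)" "(0, x) \<in> \<Gamma>" "\<phi> 0 x = x"
  using assms by (simp_all add: partial_flow_def flow_dom_def)

lemma partial_flow_dom_shift: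
  assumes "partial_flow \<Gamma> \<phi>" "(t, x) \<in> \<Gamma>"
  shows "(s, \<phi> t x) \<in> \<Gamma> \<longleftrightarrow> (s + t, x) \<in> \<Gamma>"
proof -
  have "flow_dom \<Gamma> (\<phi> t x) = (\<lambda>s. s - t) ` flow_dom \<Gamma> x"
    using assms by (auto simp: partial_flow_def flow_dom_def)
  then have "s \<in> flow_dom \<Gamma> (\<phi> t x) \<longleftrightarrow> s + t \<in> flow_dom \<Gamma> x"
    by (auto simp: image_iff intro!: bexI[of _ "s + t"])
  then show ?thesis by (simp add: flow_dom_def)
qed

lemma partial_flow_comp:
  assumes "partial_flow \<Gamma> \<phi>" "(t, x) \<in> \<Gamma>" "(s + t, x) \<in> \<Gamma>"
  shows "\<phi> s (\<phi> t x) = \<phi> (s + t) x"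
proof -
  have "(s, \<phi> t x) \<in> \<Gamma>" using partial_flow_dom_shift[OF assms(1,2)] assms(3) by simp
  then show ?thesis using assms unfolding partial_flow_def flow_dom_def by blast
qed

lemma continuous_on_orbit:
  assumes "partial_flow \<Gamma> \<phi>"
  shows "continuous_on {t. (t, x) \<in> \<Gamma>} (\<lambda>t. \<phi> t x)"
proof -
  have "continuous_on {t. (t, x) \<in> \<Gamma>} ((\<lambda>(t, x). \<phi> t x) \<circ> (\<lambda>t. (t, x)))"
    by (rule continuous_on_compose)
      (auto intro!: continuous_intros continuous_on_subset[OF partial_flowD(2)[OF assms]])
  then show ?thesis by (simp add: o_def)
qed

lemma open_orbit_preimage:
  assumes "partial_flow \<Gamma> \<phi>" "open W"
  shows "open {t. (t, x) \<in> \<Gamma> \<and> \<phi> t x \<in> W}"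
proof -
  have "open (\<Gamma> \<inter> (\<lambda>(t, x). \<phi> t x) -` W)"
    using continuous_open_preimage partial_flowD(1,2)[OF assms(1)] assms(2) by blast
  then have "open ((\<lambda>t::real. (t, x)) -` (\<Gamma> \<inter> (\<lambda>(t, x). \<phi> t x) -` W))"
    by (intro open_vimage) (auto intro!: continuous_intros)
  moreover have "(\<lambda>t. (t, x)) -` (\<Gamma> \<inter> (\<lambda>(t, x). \<phi> t x) -` W) = {t. (t, x) \<in> \<Gamma> \<and> \<phi> t x \<in> W}"
    by auto
  ultimately show ?thesis by simp
qed

lemma has_real_derivative_orbit:
  assumes pf: "partial_flow \<Gamma> \<phi>" and J: "open J" "t \<in> J"
    and JD: "\<And>s. s \<in> J \<Longrightarrow> (s, x) \<in> \<Gamma> \<and> \<phi> s x \<in> D"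
    and ld: "has_lie_deriv \<Gamma> \<phi> D L (\<phi> t x) l"
  shows "((\<lambda>s. L (\<phi> s x)) has_real_derivative l) (at t)"
proof -
  let ?y = "\<phi> t x" and ?V = "(\<lambda>s. s + t) -` J"
  have tx: "(t, x) \<in> \<Gamma>" using JD J by auto
  have oV: "open ?V" using J by (intro open_vimage) (auto intro!: continuous_intros)
  have V0: "0 \<in> ?V" using J by simp
  have V: "(s, ?y) \<in> \<Gamma> \<and> \<phi> s ?y \<in> D \<and> \<phi> s ?y = \<phi> (t + s) x" if "s \<in> ?V" for s
  proof -
    have "(s + t, x) \<in> \<Gamma>" "\<phi> (s + t) x \<in> D" using that JD by auto
    then show ?thesis
      using partial_flow_dom_shift[OF pf tx] partial_flow_comp[OF pf tx] by (simp add: add.commute)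
  qed
  have "((\<lambda>s. (L (\<phi> s ?y) - L ?y) / s) \<longlongrightarrow> l) (at 0 within ?V)"
    using ld unfolding has_lie_deriv_def by (rule tendsto_within_subset) (use V in auto)
  then have lim: "((\<lambda>s. (L (\<phi> s ?y) - L ?y) / s) \<longlongrightarrow> l) (at 0)"
    by (subst (asm) tendsto_within_open[OF V0 oV])
  have "eventually (\<lambda>s. s \<in> ?V) (at 0)"
    using oV V0 eventually_at_topological by blast
  then have ev: "eventually (\<lambda>s. (L (\<phi> s ?y) - L ?y) / s = (L (\<phi> (t + s) x) - L ?y) / s) (at 0)"
    by (rule eventually_mono) (use V in auto)
  show ?thesis unfolding DERIV_def using tendsto_cong[OF ev] lim by simp
qed

lemma tendsto_difference_quotient_eq_on:
  fixes w :: "real \<Rightarrow> real"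
  assumes "(w has_real_derivative l) (at 0)" "r > 0"
    and "\<And>t. \<bar>t\<bar> < r \<Longrightarrow> t \<in> S \<Longrightarrow> F t = w t" "F 0 = w 0"
  shows "((\<lambda>t. (F t - F 0) / t) \<longlongrightarrow> l) (at 0 within S)"
proof -
  have "((\<lambda>t. (w t - w 0) / t) \<longlongrightarrow> l) (at 0)"
    using assms(1) unfolding DERIV_def by simp
  then have "((\<lambda>t. (w t - w 0) / t) \<longlongrightarrow> l) (at 0 within S)"
    by (rule tendsto_within_subset) simp
  moreover have "eventually (\<lambda>t. (w t - w 0) / t = (F t - F 0) / t) (at 0 within S)"
    unfolding eventually_at using assms(2-4) by (auto simp: dist_real_def intro!: exI[of _ r])
  ultimately show ?thesis by (rule Lim_transform_eventually)
qed

lemma hyperbolic_system_zero: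
  fixes k k' :: "real \<Rightarrow> real"
  assumes "r > 0"
    and d1: "\<And>s. \<bar>s\<bar> < r \<Longrightarrow> (k has_real_derivative k' s) (at s)"
    and d2: "\<And>s. \<bar>s\<bar> < r \<Longrightarrow> (k' has_real_derivative k s) (at s)"
    and "k 0 = 0" "k' 0 = 0" "\<bar>s\<bar> < r"
  shows "k s = 0"
proof -
  have const: "g s = g 0" if g: "\<And>s. \<bar>s\<bar> < r \<Longrightarrow> (g has_real_derivative 0) (at s)" for g
  proof (rule DERIV_isconst3[of "-r" r s 0 g])
    show "s \<in> {-r<..<r}" using assms(6) by (simp add: abs_less_iff)
  qed (use assms(1) in \<open>auto intro: g simp: abs_less_iff\<close>)
  \<comment> \<open>\<open>(k + k') e\<^sup>-\<^sup>s\<close> and \<open>(k - k') e\<^sup>s\<close> are first integrals of the system.\<close>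
  have "(k s + k' s) * exp (- s) = (k 0 + k' 0) * exp (- 0)"
  proof (rule const[of "\<lambda>s. (k s + k' s) * exp (- s)"])
    fix s :: real assume s: "\<bar>s\<bar> < r"
    have "((\<lambda>s. (k s + k' s) * exp (- s)) has_real_derivative
        (k' s + k s) * exp (- s) + (k s + k' s) * (exp (- s) * - 1)) (at s)"
      using d1[OF s] d2[OF s] by (intro derivative_eq_intros) auto
    then show "((\<lambda>s. (k s + k' s) * exp (- s)) has_real_derivative 0) (at s)"
      by (simp add: algebra_simps)
  qed
  moreover have "(k s - k' s) * exp s = (k 0 - k' 0) * exp 0"
  proof (rule const[of "\<lambda>s. (k s - k' s) * exp s"])
    fix s :: real assume s: "\<bar>s\<bar> < r"
    have "((\<lambda>s. (k s - k' s) * exp s) has_real_derivative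
        (k' s - k s) * exp s + (k s - k' s) * (exp s * 1)) (at s)"
      using d1[OF s] d2[OF s] by (intro derivative_eq_intros) auto
    then show "((\<lambda>s. (k s - k' s) * exp s) has_real_derivative 0) (at s)"
      by (simp add: algebra_simps)
  qed
  ultimately have "k s + k' s = 0" "k s - k' s = 0" using assms(4,5) by simp_all
  then show ?thesis by simp
qed

lemma quadratic_larger_root:
  fixes p m \<delta> :: real
  assumes p: "p > 0" and m: "m \<ge> 0" and pm: "p + m \<le> 2 * \<delta>"
  defines "u\<^sub>0 \<equiv> (\<delta> + sqrt (\<delta>\<^sup>2 - p * m)) / p"
  shows "1 \<le> u\<^sub>0" "p * u\<^sub>0 + m / u\<^sub>0 = 2 * \<delta>"
    "\<And>u. 1 \<le> u \<Longrightarrow> p * u + m / u \<le> 2 * \<delta> \<longleftrightarrow> u \<le> u\<^sub>0"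
proof -
  define S where "S = sqrt (\<delta>\<^sup>2 - p * m)"
  have "4 * (p * m) \<le> (p + m)\<^sup>2"
    using sum_squares_ge_zero[of "p - m" 0] by (simp add: power2_eq_square algebra_simps)
  also have "\<dots> \<le> (2 * \<delta>)\<^sup>2" using pm p m by (intro power_mono) auto
  finally have S: "S \<ge> 0" "S\<^sup>2 = \<delta>\<^sup>2 - p * m" by (auto simp: S_def power2_eq_square)
  define u\<^sub>1 where "u\<^sub>1 = (\<delta> - S) / p"
  have u\<^sub>0: "u\<^sub>0 = (\<delta> + S) / p" by (simp add: u\<^sub>0_def S_def)
  have sum: "p * (u\<^sub>0 + u\<^sub>1) = 2 * \<delta>" using p by (simp add: u\<^sub>0 u\<^sub>1_def field_simps)
  have "p * (u\<^sub>0 * u\<^sub>1) = (\<delta> + S) * (\<delta> - S) / p" using p by (simp add: u\<^sub>0 u\<^sub>1_def field_simps)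
  also have "(\<delta> + S) * (\<delta> - S) = p * m" using S(2) by (simp add: power2_eq_square algebra_simps)
  finally have prod: "p * (u\<^sub>0 * u\<^sub>1) = m" using p by simp
  have factor: "p * u\<^sup>2 - 2 * \<delta> * u + m = p * (u - u\<^sub>0) * (u - u\<^sub>1)" for u
  proof -
    have "p * (u - u\<^sub>0) * (u - u\<^sub>1) = p * u\<^sup>2 - p * (u\<^sub>0 + u\<^sub>1) * u + p * (u\<^sub>0 * u\<^sub>1)"
      by (simp add: algebra_simps power2_eq_square)
    then show ?thesis using sum prod by simp
  qed
  have "p * (1 - u\<^sub>0) * (1 - u\<^sub>1) \<le> 0" using factor[of 1] pm by simp
  moreover have "u\<^sub>1 \<le> u\<^sub>0" using S p by (simp add: u\<^sub>0 u\<^sub>1_def divide_right_mono)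
  ultimately have roots: "u\<^sub>1 \<le> 1" "1 \<le> u\<^sub>0" using p by (auto simp: mult_le_0_iff zero_le_mult_iff)
  show "1 \<le> u\<^sub>0" by (fact roots(2))
  have quot: "p * u + m / u - 2 * \<delta> = (p * u\<^sup>2 - 2 * \<delta> * u + m) / u" if "u > 0" for u
    using that by (simp add: field_simps power2_eq_square)
  show "p * u\<^sub>0 + m / u\<^sub>0 = 2 * \<delta>" using quot[of u\<^sub>0] factor[of u\<^sub>0] roots by simp
  fix u :: real assume u: "1 \<le> u"
  have "p * u + m / u \<le> 2 * \<delta> \<longleftrightarrow> p * u + m / u - 2 * \<delta> \<le> 0" by arith
  also have "\<dots> \<longleftrightarrow> (p * u\<^sup>2 - 2 * \<delta> * u + m) / u \<le> 0" using u by (simp only: quot)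
  also have "\<dots> \<longleftrightarrow> p * (u - u\<^sub>0) * (u - u\<^sub>1) \<le> 0"
    using u by (simp add: factor divide_le_0_iff)
  also have "\<dots> \<longleftrightarrow> u \<le> u\<^sub>0"
    using u roots p by (auto simp: mult_le_0_iff zero_le_mult_iff)
  finally show "p * u + m / u \<le> 2 * \<delta> \<longleftrightarrow> u \<le> u\<^sub>0" .
qed

lemma exp_combination_le_iff:
  fixes p m \<delta> :: real
  assumes "p > 0" "m \<ge> 0" "p + m \<le> 2 * \<delta>"
  defines "\<tau> \<equiv> ln ((\<delta> + sqrt (\<delta>\<^sup>2 - p * m)) / p)"
  shows "\<tau> \<ge> 0" "(p * exp \<tau> + m * exp (- \<tau>)) / 2 = \<delta>"
    "\<And>t. t \<ge> 0 \<Longrightarrow> (p * exp t + m * exp (- t)) / 2 \<le> \<delta> \<longleftrightarrow> t \<le> \<tau>"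
proof -
  note root = quadratic_larger_root[OF assms(1-3)]
  define u\<^sub>0 where "u\<^sub>0 = (\<delta> + sqrt (\<delta>\<^sup>2 - p * m)) / p"
  have u\<^sub>0: "1 \<le> u\<^sub>0" "exp \<tau> = u\<^sub>0" using root(1) by (simp_all add: \<tau>_def u\<^sub>0_def)
  have comb: "p * exp t + m * exp (- t) = p * exp t + m / exp t" for t by (simp add: exp_minus field_simps)
  show "\<tau> \<ge> 0" using u\<^sub>0 by (simp add: \<tau>_def u\<^sub>0_def)
  have "p * exp \<tau> + m / exp \<tau> = 2 * \<delta>" using root(2) by (simp only: u\<^sub>0 u\<^sub>0_def)
  then have "p * exp \<tau> + m * exp (- \<tau>) = 2 * \<delta>" using comb[of \<tau>] by simp
  then show "(p * exp \<tau> + m * exp (- \<tau>)) / 2 = \<delta>" by simp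
  fix t :: real assume t: "t \<ge> 0"
  have "(p * exp t + m * exp (- t)) / 2 \<le> \<delta> \<longleftrightarrow> p * exp t + m / exp t \<le> 2 * \<delta>"
    unfolding comb by auto
  also have "\<dots> \<longleftrightarrow> exp t \<le> u\<^sub>0" using root(3) t by (simp add: u\<^sub>0_def)
  also have "\<dots> \<longleftrightarrow> t \<le> \<tau>" using u\<^sub>0 by (simp add: \<tau>_def u\<^sub>0_def[symmetric] ln_ge_iff)
  finally show "(p * exp t + m * exp (- t)) / 2 \<le> \<delta> \<longleftrightarrow> t \<le> \<tau>" .
qed

lemma unit_interval_mult_ne_one:
  fixes p q :: real
  assumes "0 \<le> p" "p \<le> 1" "0 \<le> q" "q \<le> 1" "p * q \<noteq> 1"
  shows "p * q < 1" "0 \<le> p * q" "1 - (p * q)\<^sup>2 > 0"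
proof -
  have "p * q \<le> p" using assms mult_left_mono[of q 1 p] by simp
  then show pq: "p * q < 1" using assms by simp
  show pq0: "0 \<le> p * q" using assms by simp
  have "(p * q)\<^sup>2 \<le> p * q" using pq pq0 by (simp add: power2_eq_square mult_left_le)
  then show "1 - (p * q)\<^sup>2 > 0" using pq by simp
qed

lemma two_point_formula_abs_le:
  fixes p q G1 G2 :: real
  assumes "0 \<le> p" "p \<le> 1" "0 \<le> q" "q \<le> 1" "p * q \<noteq> 1"
  shows "\<bar>(G1 * (1 - q\<^sup>2) + G2 * (1 - p\<^sup>2)) / (1 - (p * q)\<^sup>2)\<bar> \<le> \<bar>G1\<bar> + \<bar>G2\<bar>"
proof -
  note f = unit_interval_mult_ne_one[OF assms]
  define d where "d = 1 - (p * q)\<^sup>2"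
  have d: "d > 0" using f by (simp add: d_def)
  have q2: "q\<^sup>2 \<le> 1" "p\<^sup>2 \<le> 1" using assms by (auto simp: power_le_one)
  have "(p * q)\<^sup>2 \<le> q\<^sup>2" using assms by (simp add: power_mult_distrib mult_left_le_one_le power_le_one)
  then have w1: "1 - q\<^sup>2 \<le> d" by (simp add: d_def)
  have "(p * q)\<^sup>2 \<le> p\<^sup>2" using assms by (simp add: power_mult_distrib mult_right_le_one_le power_le_one)
  then have w2: "1 - p\<^sup>2 \<le> d" by (simp add: d_def)
  have "\<bar>G1 * (1 - q\<^sup>2) + G2 * (1 - p\<^sup>2)\<bar> \<le> \<bar>G1\<bar> * (1 - q\<^sup>2) + \<bar>G2\<bar> * (1 - p\<^sup>2)"
    using q2 by (simp add: abs_mult abs_triangle_ineq[THEN order_trans])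
  also have "\<dots> \<le> \<bar>G1\<bar> * d + \<bar>G2\<bar> * d" using w1 w2 by (intro add_mono mult_left_mono) auto
  finally have "\<bar>G1 * (1 - q\<^sup>2) + G2 * (1 - p\<^sup>2)\<bar> \<le> (\<bar>G1\<bar> + \<bar>G2\<bar>) * d" by (simp add: algebra_simps)
  then show ?thesis using d by (simp add: d_def[symmetric] abs_div pos_divide_le_eq)
qed

lemma two_point_formula_weights:
  fixes p q :: real
  assumes "0 \<le> p" "p \<le> 1" "0 \<le> q" "q \<le> 1" "p * q \<noteq> 1"
  shows "p * (1 - q\<^sup>2) / (1 - (p * q)\<^sup>2) \<ge> 0" "q * (1 - p\<^sup>2) / (1 - (p * q)\<^sup>2) \<ge> 0"
    "1 - p * (1 - q\<^sup>2) / (1 - (p * q)\<^sup>2) - q * (1 - p\<^sup>2) / (1 - (p * q)\<^sup>2)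
      = (1 - p) * (1 - q) / (1 + p * q)"
proof -
  note f = unit_interval_mult_ne_one[OF assms]
  have "p\<^sup>2 \<le> 1" "q\<^sup>2 \<le> 1" using assms by (auto simp: power_le_one)
  then show "p * (1 - q\<^sup>2) / (1 - (p * q)\<^sup>2) \<ge> 0" "q * (1 - p\<^sup>2) / (1 - (p * q)\<^sup>2) \<ge> 0"
    using assms f(3) by simp_all
  have "1 - p * (1 - q\<^sup>2) / (1 - (p * q)\<^sup>2) - q * (1 - p\<^sup>2) / (1 - (p * q)\<^sup>2)
      = (1 - (p * q)\<^sup>2 - p * (1 - q\<^sup>2) - q * (1 - p\<^sup>2)) / (1 - (p * q)\<^sup>2)"
    using f(3) by (simp add: diff_divide_distrib)
  also have "\<dots> = ((1 - p) * (1 - q)) * (1 - p * q) / ((1 + p * q) * (1 - p * q))"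
    by (simp add: power2_eq_square algebra_simps)
  also have "\<dots> = (1 - p) * (1 - q) / (1 + p * q)"
    using f(1) by (intro mult_divide_mult_cancel_right) simp
  finally show "1 - p * (1 - q\<^sup>2) / (1 - (p * q)\<^sup>2) - q * (1 - p\<^sup>2) / (1 - (p * q)\<^sup>2)
      = (1 - p) * (1 - q) / (1 + p * q)" .
qed

lemma two_point_formula_dist_le:
  fixes p q X Y Z :: real
  assumes "0 \<le> p" "p \<le> 1" "0 \<le> q" "q \<le> 1" "p * q \<noteq> 1"
  shows "\<bar>(p * X * (1 - q\<^sup>2) + q * Y * (1 - p\<^sup>2)) / (1 - (p * q)\<^sup>2) - Z\<bar>
    \<le> \<bar>X - Z\<bar> + \<bar>Y - Z\<bar> + (1 - p) * \<bar>Z\<bar>"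
proof -
  define w\<^sub>1 where "w\<^sub>1 = p * (1 - q\<^sup>2) / (1 - (p * q)\<^sup>2)"
  define w\<^sub>2 where "w\<^sub>2 = q * (1 - p\<^sup>2) / (1 - (p * q)\<^sup>2)"
  note w = two_point_formula_weights[OF assms, folded w\<^sub>1_def w\<^sub>2_def]
  have r: "0 \<le> 1 - w\<^sub>1 - w\<^sub>2" "1 - w\<^sub>1 - w\<^sub>2 \<le> 1 - p"
  proof -
    have "1 - q \<le> 1 + p * q" using mult_nonneg_nonneg[OF assms(1,3)] assms(3) by linarith
    moreover have "1 + p * q > 0" using mult_nonneg_nonneg[OF assms(1,3)] by linarith
    ultimately have "(1 - q) / (1 + p * q) \<le> 1" "0 \<le> (1 - q) / (1 + p * q)"
      using assms by (simp_all add: pos_divide_le_eq)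
    then show "0 \<le> 1 - w\<^sub>1 - w\<^sub>2" "1 - w\<^sub>1 - w\<^sub>2 \<le> 1 - p"
      unfolding w(3) using assms mult_left_le[of "(1 - q) / (1 + p * q)" "1 - p"] by simp_all
  qed
  have "(p * X * (1 - q\<^sup>2) + q * Y * (1 - p\<^sup>2)) / (1 - (p * q)\<^sup>2) = w\<^sub>1 * X + w\<^sub>2 * Y"
    by (simp add: w\<^sub>1_def w\<^sub>2_def add_divide_distrib mult_ac)
  then have "(p * X * (1 - q\<^sup>2) + q * Y * (1 - p\<^sup>2)) / (1 - (p * q)\<^sup>2) - Z
      = w\<^sub>1 * (X - Z) + w\<^sub>2 * (Y - Z) - (1 - w\<^sub>1 - w\<^sub>2) * Z"
    by (simp add: algebra_simps)
  also have "\<bar>\<dots>\<bar> \<le> w\<^sub>1 * \<bar>X - Z\<bar> + w\<^sub>2 * \<bar>Y - Z\<bar> + (1 - w\<^sub>1 - w\<^sub>2) * \<bar>Z\<bar>"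
    using w(1,2) r(1) by (simp add: abs_mult abs_triangle_ineq4[THEN order_trans] abs_triangle_ineq[THEN order_trans])
  also have "\<dots> \<le> 1 * \<bar>X - Z\<bar> + 1 * \<bar>Y - Z\<bar> + (1 - p) * \<bar>Z\<bar>"
    using w r by (intro add_mono mult_right_mono) auto
  finally show ?thesis by simp
qed

lemma no_max_with_positive_second_deriv:
  fixes g g' :: "real \<Rightarrow> real"
  assumes J: "open J" "0 \<in> J"
    and d1: "\<And>s. s \<in> J \<Longrightarrow> (g has_real_derivative g' s) (at s)"
    and d2: "(g' has_real_derivative c) (at 0)" and c: "c > 0"
    and mx: "\<And>s. s \<in> J \<Longrightarrow> g s \<le> g 0"
  shows False
proof -
  obtain d where d: "d > 0" "ball 0 d \<subseteq> J" using J open_contains_ball by blast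
  have inJ: "s \<in> J" if "\<bar>s\<bar> < d" for s using d that by (auto simp: dist_real_def)
  have g'0: "g' 0 = 0"
    by (rule DERIV_local_max[OF d1[OF J(2)] d(1)]) (use inJ mx in auto)
  obtain d2 where d2p: "d2 > 0" and inc: "\<And>h. h > 0 \<Longrightarrow> h < d2 \<Longrightarrow> g' 0 < g' (0 + h)"
    using DERIV_pos_inc_right[OF d2 c] by blast
  define h where "h = min d d2 / 2"
  have h: "0 < h" "h < d" "h < d2" using d d2p by (auto simp: h_def)
  obtain z where z: "0 < z" "z < h" "g h - g 0 = (h - 0) * g' z"
    using MVT2[OF h(1), of g g'] d1 inJ h by force
  have "g' z > 0" using inc[of z] z h g'0 by simp
  then have "h * g' z > 0" using h by simp
  then have "g h > g 0" using z by simp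
  moreover have "g h \<le> g 0" using mx inJ h by simp
  ultimately show False by simp
qed

lemma one_minus_square_pos: "0 \<le> (q::real) \<Longrightarrow> q < 1 \<Longrightarrow> 1 - q\<^sup>2 > 0"
proof -
  assume q: "0 \<le> q" "q < 1"
  have "q * q \<le> q" using q by (intro mult_right_le_one_le) auto
  then show ?thesis using q by (simp add: power2_eq_square)
qed

section \<open>Orbits through the sublevel set of a catenary function\<close>

locale catenary_region =
  fixes \<Gamma> :: "(real \<times> 'a::metric_space) set"
    and \<phi> :: "real \<Rightarrow> 'a \<Rightarrow> 'a"
    and \<Lambda> N :: "'a set"
    and L1 L1' :: "'a \<Rightarrow> real"
    and \<delta> :: real
  assumes flow: "partial_flow \<Gamma> \<phi>"
    and invariant: "flow_invariant \<Gamma> \<phi> \<Lambda>"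
    and compact_N: "compact N" and Lambda_interior_N: "\<Lambda> \<subseteq> interior N"
    and continuous_L1: "continuous_on N L1"
    and L1_Lambda: "\<And>x. x \<in> \<Lambda> \<Longrightarrow> L1 x = 0"
    and L1_pos: "\<And>x. x \<in> N - \<Lambda> \<Longrightarrow> L1 x > 0"
    and L1_deriv: "\<And>x. x \<in> N \<Longrightarrow> has_lie_deriv \<Gamma> \<phi> N L1 x (L1' x)"
    and L1'_deriv: "\<And>x. x \<in> N \<Longrightarrow> has_lie_deriv \<Gamma> \<phi> N L1' x (L1 x)"
    and delta_pos: "\<delta> > 0"
    and B_interior_N: "{x\<in>N. L1 x \<le> \<delta>} \<subseteq> interior N"
begin

abbreviation "B \<equiv> {x\<in>N. L1 x \<le> \<delta>}"
abbreviation "D \<equiv> B - \<Lambda>"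

lemma flow_zero [simp]: "(0, x) \<in> \<Gamma>" and flow_id [simp]: "\<phi> 0 x = x"
  using partial_flowD(3,4)[OF flow] by auto

lemma Lambda_subset_N: "\<Lambda> \<subseteq> N" using Lambda_interior_N interior_subset by blast

lemma L1_nonneg: "x \<in> N \<Longrightarrow> L1 x \<ge> 0"
  using L1_Lambda L1_pos by (cases "x \<in> \<Lambda>") (auto intro: less_imp_le)

lemma closed_N: "closed N" using compact_N compact_imp_closed by blast

lemma closed_B: "closed B"
proof -
  have "closed (N \<inter> L1 -` {..\<delta>})"
    by (rule continuous_closed_preimage[OF continuous_L1 closed_N]) auto
  moreover have "N \<inter> L1 -` {..\<delta>} = B" by auto
  ultimately show ?thesis by simp
qed

lemma compact_B: "compact B"
proof -
  have "compact (N \<inter> B)" by (rule compact_Int_closed[OF compact_N closed_B])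
  moreover have "N \<inter> B = B" by auto
  ultimately show ?thesis by simp
qed

lemma closed_Lambda: "closed \<Lambda>"
proof -
  have "closed (N \<inter> L1 -` {0})"
    by (rule continuous_closed_preimage[OF continuous_L1 closed_N]) auto
  moreover have "N \<inter> L1 -` {0} = \<Lambda>" using L1_Lambda L1_pos Lambda_subset_N by force
  ultimately show ?thesis by simp
qed

lemma Lambda_subset_B: "\<Lambda> \<subseteq> B" using Lambda_subset_N L1_Lambda delta_pos by fastforce

lemma interior_BI: "x \<in> interior N \<Longrightarrow> L1 x < \<delta> \<Longrightarrow> x \<in> interior B"
proof -
  assume x: "x \<in> interior N" "L1 x < \<delta>"
  have c: "continuous_on (interior N) L1" using continuous_L1 interior_subset continuous_on_subset by blast
  have o: "open (interior N \<inter> L1 -` {..<\<delta>})"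
    by (rule continuous_open_preimage[OF c]) auto
  have "interior N \<inter> L1 -` {..<\<delta>} \<subseteq> B" using interior_subset by fastforce
  then have "interior N \<inter> L1 -` {..<\<delta>} \<subseteq> interior B" using o interior_maximal by blast
  then show ?thesis using x by auto
qed

lemma frontier_BD: "x \<in> frontier B \<Longrightarrow> x \<in> B \<and> L1 x = \<delta>"
proof -
  assume x: "x \<in> frontier B"
  then have xB: "x \<in> B" using closed_B frontier_subset_closed by blast
  then have "x \<in> interior N" using B_interior_N by blast
  moreover have "x \<notin> interior B" using x by (simp add: frontier_def)
  ultimately have "\<not> L1 x < \<delta>" using interior_BI by blast
  then show ?thesis using xB by auto
qed

lemma interior_B_if_not_frontier: "x \<in> B \<Longrightarrow> x \<notin> frontier B \<Longrightarrow> x \<in> interior B"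
  using closed_B closure_closed by (auto simp: frontier_def)

lemma orbit_in_Lambda: "x \<in> \<Lambda> \<Longrightarrow> (t, x) \<in> \<Gamma> \<Longrightarrow> \<phi> t x \<in> \<Lambda>"
  using invariant by (auto simp: flow_invariant_def flow_dom_def)

lemma orbit_notin_Lambda: "x \<notin> \<Lambda> \<Longrightarrow> (t, x) \<in> \<Gamma> \<Longrightarrow> \<phi> t x \<notin> \<Lambda>"
proof
  assume x: "x \<notin> \<Lambda>" "(t, x) \<in> \<Gamma>" "\<phi> t x \<in> \<Lambda>"
  have "(-t, \<phi> t x) \<in> \<Gamma>" using partial_flow_dom_shift[OF flow x(2)] flow_zero by simp
  then have "\<phi> (-t) (\<phi> t x) \<in> \<Lambda>" using orbit_in_Lambda x(3) by blast
  moreover have "\<phi> (-t) (\<phi> t x) = x" using partial_flow_comp[OF flow x(2), of "-t"] flow_zero flow_id by simp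
  ultimately show False using x by simp
qed

lemma flow_tube: "\<exists>t0>0. \<forall>y\<in>B. \<forall>s. \<bar>s\<bar> < 2 * t0 \<longrightarrow> (s, y) \<in> \<Gamma> \<and> \<phi> s y \<in> interior N"
proof -
  let ?G = "\<Gamma> \<inter> (\<lambda>(t, x). \<phi> t x) -` interior N"
  have oG: "open ?G"
    by (rule continuous_open_preimage[OF partial_flowD(2)[OF flow] partial_flowD(1)[OF flow]]) auto
  have cS: "compact ({0::real} \<times> B)" using compact_B by (simp add: compact_Times)
  have sub: "{0::real} \<times> B \<subseteq> \<Union>{?G}" using B_interior_N flow_zero flow_id by auto
  obtain e where e: "0 < e" "\<And>p. p \<in> {0::real} \<times> B \<Longrightarrow> \<exists>G\<in>{?G}. ball p e \<subseteq> G"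
    using Heine_Borel_lemma[OF cS sub] oG by blast
  have "\<forall>y\<in>B. \<forall>s. \<bar>s\<bar> < 2 * (e/2) \<longrightarrow> (s, y) \<in> \<Gamma> \<and> \<phi> s y \<in> interior N"
  proof (intro ballI allI impI)
    fix y s assume y: "y \<in> B" and s: "\<bar>s\<bar> < 2 * (e/2)"
    have "ball (0, y) e \<subseteq> ?G" using e(2)[of "(0,y)"] y by auto
    moreover have "(s, y) \<in> ball (0, y) e" using s by (simp add: dist_Pair_Pair dist_real_def)
    ultimately show "(s, y) \<in> \<Gamma> \<and> \<phi> s y \<in> interior N" by auto
  qed
  then show ?thesis using e(1) by (intro exI[of _ "e/2"]) auto
qed

definition tube_time :: "real" where
  "tube_time = (SOME t0. t0 > 0 \<and> (\<forall>y\<in>B. \<forall>s. \<bar>s\<bar> < 2 * t0 \<longrightarrow> (s, y) \<in> \<Gamma> \<and> \<phi> s y \<in> interior N))"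

lemma tube_time: "tube_time > 0" "\<And>y s. y \<in> B \<Longrightarrow> \<bar>s\<bar> < 2 * tube_time \<Longrightarrow> (s, y) \<in> \<Gamma> \<and> \<phi> s y \<in> interior N"
  using someI_ex[OF flow_tube] unfolding tube_time_def[symmetric] by auto

definition L1_orbit :: "'a \<Rightarrow> real \<Rightarrow> real" where
  "L1_orbit y t = L1 y * cosh t + L1' y * sinh t"
definition L1'_orbit :: "'a \<Rightarrow> real \<Rightarrow> real" where
  "L1'_orbit y t = L1 y * sinh t + L1' y * cosh t"

lemma L1_orbit_shift: "L1_orbit y c * cosh r + L1'_orbit y c * sinh r = L1_orbit y (c + r)"
  by (simp add: L1_orbit_def L1'_orbit_def cosh_add sinh_add algebra_simps)
lemma L1'_orbit_shift: "L1_orbit y c * sinh r + L1'_orbit y c * cosh r = L1'_orbit y (c + r)"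
  by (simp add: L1_orbit_def L1'_orbit_def cosh_add sinh_add algebra_simps)

lemma L1_on_orbit_local:
  assumes y: "y \<in> B" and s: "\<bar>s\<bar> < 2 * tube_time"
  shows "L1 (\<phi> s y) = L1_orbit y s \<and> L1' (\<phi> s y) = L1'_orbit y s"
proof -
  define k where "k s = L1 (\<phi> s y) - L1_orbit y s" for s
  define k1 where "k1 s = L1' (\<phi> s y) - L1'_orbit y s" for s
  have JD: "(s, y) \<in> \<Gamma> \<and> \<phi> s y \<in> N" if "s \<in> {s. \<bar>s\<bar> < 2 * tube_time}" for s
    using tube_time(2)[OF y, of s] that interior_subset by auto
  have oJ: "open {s::real. \<bar>s\<bar> < 2 * tube_time}"
    using open_ball[of "0::real" "2*tube_time"] by (simp add: ball_def dist_real_def)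
  have d1: "(k has_real_derivative k1 s) (at s)" if "\<bar>s\<bar> < 2 * tube_time" for s
  proof -
    have "((\<lambda>s. L1 (\<phi> s y)) has_real_derivative L1' (\<phi> s y)) (at s)"
      by (rule has_real_derivative_orbit[OF flow oJ _ JD]) (use that JD in \<open>auto intro: L1_deriv\<close>)
    then show ?thesis unfolding k_def k1_def L1_orbit_def L1'_orbit_def
      by (auto intro!: derivative_eq_intros)
  qed
  have d2: "(k1 has_real_derivative k s) (at s)" if "\<bar>s\<bar> < 2 * tube_time" for s
  proof -
    have "((\<lambda>s. L1' (\<phi> s y)) has_real_derivative L1 (\<phi> s y)) (at s)"
      by (rule has_real_derivative_orbit[OF flow oJ _ JD]) (use that JD in \<open>auto intro: L1'_deriv\<close>)
    then show ?thesis unfolding k_def k1_def L1_orbit_def L1'_orbit_def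
      by (auto intro!: derivative_eq_intros)
  qed
  have i: "k 0 = 0" "k1 0 = 0" by (auto simp: k_def k1_def L1_orbit_def L1'_orbit_def flow_id)
  have r: "2 * tube_time > 0" using tube_time by simp
  have "k s = 0" by (rule hyperbolic_system_zero[OF r d1 d2 i s])
  moreover have "k1 s = 0" by (rule hyperbolic_system_zero[OF r d2 d1 i(2,1) s])
  ultimately show ?thesis by (simp add: k_def k1_def)
qed

lemma L1_on_orbit_step:
  assumes c: "(c, y) \<in> \<Gamma>" "\<phi> c y \<in> B" "L1 (\<phi> c y) = L1_orbit y c" "L1' (\<phi> c y) = L1'_orbit y c"
    and r: "\<bar>r\<bar> < 2 * tube_time"
  shows "(c + r, y) \<in> \<Gamma> \<and> \<phi> (c + r) y \<in> N \<and>
    L1 (\<phi> (c + r) y) = L1_orbit y (c + r) \<and> L1' (\<phi> (c + r) y) = L1'_orbit y (c + r)"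
proof -
  let ?z = "\<phi> c y"
  have rz: "(r, ?z) \<in> \<Gamma>" "\<phi> r ?z \<in> interior N" using tube_time(2)[OF c(2) r] by auto
  have G: "(r + c, y) \<in> \<Gamma>" using partial_flow_dom_shift[OF flow c(1)] rz(1) by simp
  have comp: "\<phi> r ?z = \<phi> (c + r) y" using partial_flow_comp[OF flow c(1) G] by (simp add: add.commute)
  have "L1 (\<phi> r ?z) = L1_orbit ?z r" "L1' (\<phi> r ?z) = L1'_orbit ?z r"
    using L1_on_orbit_local[OF c(2) r] by auto
  moreover have "L1_orbit ?z r = L1_orbit y (c + r)" "L1'_orbit ?z r = L1'_orbit y (c + r)"
    using L1_orbit_shift[of y c r] L1'_orbit_shift[of y c r] c(3,4)
    by (simp_all add: L1_orbit_def[of ?z] L1'_orbit_def[of ?z])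
  ultimately show ?thesis using G comp rz(2) interior_subset by (auto simp: add.commute)
qed

text \<open>Moving in steps shorter than \<open>tube_time\<close>, the orbit formula persists as long as it
  predicts values of \<open>L1\<close> at most \<open>\<delta>\<close>, i.e.\ as long as the orbit stays in \<open>B\<close>.\<close>

lemma L1_on_orbit:
  assumes y: "y \<in> B" and e: "e = 1 \<or> e = -1" and b: "b \<ge> 0"
    and hb: "\<And>s. 0 \<le> s \<Longrightarrow> s \<le> b \<Longrightarrow> L1_orbit y (e * s) \<le> \<delta>"
    and s: "0 \<le> s" "s \<le> b"
  shows "(e * s, y) \<in> \<Gamma> \<and> \<phi> (e * s) y \<in> B \<and>
    L1 (\<phi> (e * s) y) = L1_orbit y (e * s) \<and> L1' (\<phi> (e * s) y) = L1'_orbit y (e * s)"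
proof -
  let ?P = "\<lambda>s. (e * s, y) \<in> \<Gamma> \<and> \<phi> (e * s) y \<in> B \<and>
    L1 (\<phi> (e * s) y) = L1_orbit y (e * s) \<and> L1' (\<phi> (e * s) y) = L1'_orbit y (e * s)"
  have ind: "\<forall>s. 0 \<le> s \<and> s \<le> min b (real n * tube_time) \<longrightarrow> ?P s" for n
  proof (induction n)
    case 0
    then show ?case using y by (auto simp: L1_orbit_def L1'_orbit_def)
  next
    case (Suc n)
    let ?c = "min b (real n * tube_time)"
    have "0 \<le> ?c" using b tube_time(1) by simp
    then have Pc: "?P ?c" using Suc.IH[rule_format, of ?c] by simp
    show ?case
    proof (intro allI impI)
      fix s assume s: "0 \<le> s \<and> s \<le> min b (real (Suc n) * tube_time)"
      show "?P s"
      proof (cases "s \<le> ?c")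
        case True then show ?thesis using Suc.IH s by auto
      next
        case False
        then have "?c = real n * tube_time" using s by auto
        then have "\<bar>e * (s - ?c)\<bar> < 2 * tube_time" using False s e tube_time(1) by (auto simp: algebra_simps)
        moreover have "e * ?c + e * (s - ?c) = e * s" by (simp add: algebra_simps)
        ultimately have "(e * s, y) \<in> \<Gamma> \<and> \<phi> (e * s) y \<in> N \<and>
            L1 (\<phi> (e * s) y) = L1_orbit y (e * s) \<and> L1' (\<phi> (e * s) y) = L1'_orbit y (e * s)"
          using L1_on_orbit_step[of "e * ?c" y "e * (s - ?c)"] Pc by simp
        then show ?thesis using hb[of s] s by simp
      qed
    qed
  qed
  obtain n where "b / tube_time \<le> real n" using real_arch_simple by blast
  then have "b \<le> real n * tube_time" using tube_time(1) by (simp add: field_simps)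
  then show ?thesis using ind[of n] s by auto
qed

lemma L1_orbit_sign: "e = 1 \<or> e = -1 \<Longrightarrow> L1_orbit y (e * s) = L1 y * cosh s + e * L1' y * sinh s"
  by (auto simp: L1_orbit_def)

lemma L1_orbit_exp: "e = 1 \<or> e = -1 \<Longrightarrow>
   L1_orbit y (e * s) = ((L1 y + e * L1' y) * exp s + (L1 y - e * L1' y) * exp (- s)) / 2"
  by (auto simp: L1_orbit_def cosh_def sinh_def field_simps)

text \<open>Otherwise the orbit formula would make \<open>L1\<close> negative before the orbit can leave \<open>B\<close>.\<close>

lemma L1_plus_L1'_nonneg:
  assumes y: "y \<in> B" and e: "e = 1 \<or> e = -1"
  shows "L1 y + e * L1' y \<ge> 0"
proof (rule ccontr)
  assume neg: "\<not> L1 y + e * L1' y \<ge> 0"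
  let ?A = "L1 y" and ?w = "L1 y + e * L1' y"
  have A0: "?A \<ge> 0" using y L1_nonneg by auto
  have Ad: "?A \<le> \<delta>" using y by auto
  have bnd: "L1_orbit y (e * s) \<le> ?A + ?w * sinh s" if "s \<ge> 0" for s
  proof -
    have "L1_orbit y (e * s) = ?A * (cosh s - sinh s) + ?w * sinh s" unfolding L1_orbit_sign[OF e] by (simp add: algebra_simps)
    also have "?A * (cosh s - sinh s) \<le> ?A"
      using A0 cosh_minus_sinh[of s] that by (simp add: mult_left_le)
    finally show ?thesis by simp
  qed
  define s where "s = arsinh (?A / (- ?w) + 1)"
  have sh: "sinh s = ?A / (- ?w) + 1" by (simp add: s_def)
  have shp: "sinh s > 0" using sh A0 neg by (simp add: add_nonneg_pos)
  then have s0: "s \<ge> 0" by simp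
  have hb: "L1_orbit y (e * s') \<le> \<delta>" if "0 \<le> s'" "s' \<le> s" for s'
  proof -
    have "?w * sinh s' \<le> 0" using neg that by (simp add: mult_nonpos_nonneg)
    then show ?thesis using bnd[of s'] that Ad by simp
  qed
  have c: "\<phi> (e * s) y \<in> B \<and> L1 (\<phi> (e * s) y) = L1_orbit y (e * s)"
    using L1_on_orbit[OF y e s0 hb _ _ , of s] s0 by auto
  have "L1_orbit y (e * s) \<le> ?A + ?w * (?A / (- ?w) + 1)" using bnd[OF s0] sh by simp
  also have "\<dots> = ?w" using neg by (simp add: field_simps)
  finally have "L1 (\<phi> (e * s) y) < 0" using c neg by simp
  moreover have "L1 (\<phi> (e * s) y) \<ge> 0" by (rule L1_nonneg) (use c in auto)
  ultimately show False by simp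
qed

lemma abs_L1'_le: "y \<in> B \<Longrightarrow> \<bar>L1' y\<bar> \<le> L1 y"
  using L1_plus_L1'_nonneg[of y 1] L1_plus_L1'_nonneg[of y "-1"] by auto

lemma isCont_orbit: "isCont (\<lambda>t. \<phi> t y) 0"
proof -
  have o: "open {t. (t, y) \<in> \<Gamma> \<and> \<phi> t y \<in> UNIV}" by (rule open_orbit_preimage[OF flow]) auto
  have "0 \<in> interior {t. (t, y) \<in> \<Gamma>}" using o flow_zero by (simp add: interior_open)
  then show ?thesis using continuous_on_interior[OF continuous_on_orbit[OF flow]] by blast
qed

lemma leaves_B_at_level_delta:
  assumes y: "y \<in> B" and Ly: "L1 y = \<delta>"
  obtains e where "e = 1 \<or> e = -1" "\<And>s. 0 < s \<Longrightarrow> s < tube_time \<Longrightarrow> \<phi> (e * s) y \<notin> B"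
proof
  define e :: real where "e = (if L1' y \<ge> 0 then 1 else -1)"
  show e: "e = 1 \<or> e = -1" by (simp add: e_def)
  fix s :: real assume s: "0 < s" "s < tube_time"
  then have "\<bar>e * s\<bar> < 2 * tube_time" using e by auto
  then have "L1 (\<phi> (e * s) y) = \<delta> * cosh s + e * L1' y * sinh s"
    using L1_on_orbit_local[OF y] L1_orbit_sign[OF e] Ly by simp
  moreover have "e * L1' y * sinh s \<ge> 0" using s by (simp add: e_def)
  moreover have "\<delta> * cosh s > \<delta>" using cosh_real_strict_mono[of 0 s] s delta_pos by simp
  ultimately show "\<phi> (e * s) y \<notin> B" by simp
qed

lemma frontier_BI:
  assumes y: "y \<in> B" and Ly: "L1 y = \<delta>"
  shows "y \<in> frontier B"
proof -
  obtain e where e: "e = 1 \<or> e = -1" and out: "\<And>s. 0 < s \<Longrightarrow> s < tube_time \<Longrightarrow> \<phi> (e * s) y \<notin> B"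
    using leaves_B_at_level_delta[OF y Ly] by blast
  have "y \<notin> interior B"
  proof
    assume "y \<in> interior B"
    then obtain r where r: "r > 0" "ball y r \<subseteq> B"
      using open_interior[of B] interior_subset[of B] unfolding open_contains_ball by blast
    obtain d where d: "d > 0" "\<And>t. t \<noteq> 0 \<Longrightarrow> \<bar>t\<bar> < d \<Longrightarrow> dist (\<phi> t y) y < r"
      using metric_LIM_D[OF isCont_orbit[of y, unfolded isCont_def] r(1)] by (auto simp: dist_real_def)
    define s where "s = min d tube_time / 2"
    have s: "0 < s" "s < tube_time" "s < d" using d tube_time by (auto simp: s_def)
    then have "\<phi> (e * s) y \<in> ball y r" using d(2)[of "e * s"] e by (auto simp: dist_commute)
    then show False using out[OF s(1,2)] r by auto
  qed
  then show ?thesis using y closure_subset[of B] by (auto simp: frontier_def)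
qed

definition exit_root :: "'a \<Rightarrow> real" where
  "exit_root y = sqrt (\<delta>\<^sup>2 - (L1 y)\<^sup>2 + (L1' y)\<^sup>2)"

text \<open>\<open>exit_time e y\<close> solves \<open>L1_orbit y (e t) = \<delta>\<close>: it is the logarithm of the larger root of
  a quadratic equation in \<open>e\<^sup>t\<close>. It is meaningful only when \<open>L1 y + e L1' y > 0\<close>.\<close>

definition exit_time :: "real \<Rightarrow> 'a \<Rightarrow> real" where
  "exit_time e y = ln ((\<delta> + exit_root y) / (L1 y + e * L1' y))"

lemma exit_root_nonneg: "y \<in> B \<Longrightarrow> exit_root y \<ge> 0"
proof -
  assume y: "y \<in> B"
  then have "0 \<le> L1 y" "L1 y \<le> \<delta>" using L1_nonneg by auto
  then have "(L1 y)\<^sup>2 \<le> \<delta>\<^sup>2" by (intro power_mono) auto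
  then show ?thesis by (simp add: exit_root_def)
qed

lemma delta_plus_exit_root_pos: "y \<in> B \<Longrightarrow> \<delta> + exit_root y > 0"
  using exit_root_nonneg delta_pos by (simp add: add_pos_nonneg)

lemma exit_root_sign: "e = 1 \<or> e = -1 \<Longrightarrow> exit_root y = sqrt (\<delta>\<^sup>2 - (L1 y + e * L1' y) * (L1 y - e * L1' y))"
  by (auto simp: exit_root_def power2_eq_square algebra_simps)

lemma exit_time_props:
  assumes y: "y \<in> B" and e: "e = 1 \<or> e = -1" and p: "L1 y + e * L1' y > 0"
  shows "exit_time e y \<ge> 0"
    "\<And>t. t \<ge> 0 \<Longrightarrow> L1_orbit y (e * t) \<le> \<delta> \<longleftrightarrow> t \<le> exit_time e y"
    "\<And>s. 0 \<le> s \<Longrightarrow> s \<le> exit_time e y \<Longrightarrow> (e * s, y) \<in> \<Gamma> \<and> \<phi> (e * s) y \<in> B \<and>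
         L1 (\<phi> (e * s) y) = L1_orbit y (e * s) \<and> L1' (\<phi> (e * s) y) = L1'_orbit y (e * s)"
    "L1_orbit y (e * exit_time e y) = \<delta>"
    "\<phi> (e * exit_time e y) y \<in> frontier B"
proof -
  let ?p = "L1 y + e * L1' y" and ?m = "L1 y - e * L1' y"
  have m: "?m \<ge> 0" using L1_plus_L1'_nonneg[OF y, of "-e"] e by auto
  have pm: "?p + ?m \<le> 2 * \<delta>" using y by auto
  have exd: "exit_time e y = ln ((\<delta> + sqrt (\<delta>\<^sup>2 - ?p * ?m)) / ?p)" by (simp add: exit_time_def exit_root_sign[OF e])
  note A = exp_combination_le_iff[OF p m pm, folded exd]
  show ex0: "exit_time e y \<ge> 0" by (rule A(1))
  show iff: "\<And>t. t \<ge> 0 \<Longrightarrow> L1_orbit y (e * t) \<le> \<delta> \<longleftrightarrow> t \<le> exit_time e y"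
    unfolding L1_orbit_exp[OF e] by (rule A(3))
  show hex: "L1_orbit y (e * exit_time e y) = \<delta>" unfolding L1_orbit_exp[OF e] by (rule A(2))
  show c: "\<And>s. 0 \<le> s \<Longrightarrow> s \<le> exit_time e y \<Longrightarrow> (e * s, y) \<in> \<Gamma> \<and> \<phi> (e * s) y \<in> B \<and>
         L1 (\<phi> (e * s) y) = L1_orbit y (e * s) \<and> L1' (\<phi> (e * s) y) = L1'_orbit y (e * s)"
    by (rule L1_on_orbit[OF y e ex0]) (use iff in auto)
  show "\<phi> (e * exit_time e y) y \<in> frontier B"
    using c[OF ex0 order_refl] hex by (intro frontier_BI) auto
qed

lemma orbit_stays_in_B:
  assumes y: "y \<in> B" and e: "e = 1 \<or> e = -1" and p: "L1 y + e * L1' y = 0" and s: "s \<ge> 0"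
  shows "(e * s, y) \<in> \<Gamma> \<and> \<phi> (e * s) y \<in> B \<and>
         L1 (\<phi> (e * s) y) = L1_orbit y (e * s) \<and> L1' (\<phi> (e * s) y) = L1'_orbit y (e * s)"
proof -
  have hb: "L1_orbit y (e * s') \<le> \<delta>" if "0 \<le> s'" for s'
  proof -
    have "L1_orbit y (e * s') = (L1 y - e * L1' y) * exp (- s') / 2" using L1_orbit_exp[OF e] p by simp
    also have "\<dots> = L1 y * exp (- s')" using p e by auto
    also have "\<dots> \<le> L1 y" using that L1_nonneg[of y] y by (simp add: mult_left_le)
    finally show ?thesis using y by auto
  qed
  show ?thesis by (rule L1_on_orbit[OF y e s hb _ _, of s]) (use s in auto)
qed

lemma L1_combination_on_orbit:
  assumes x: "x \<in> B" and t: "\<bar>t\<bar> < 2 * tube_time" and e: "e = 1 \<or> e = -1"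
  shows "L1 (\<phi> t x) + e * L1' (\<phi> t x) = (L1 x + e * L1' x) * exp (e * t)"
    "exit_root (\<phi> t x) = exit_root x"
proof -
  have L: "L1 (\<phi> t x) = L1_orbit x t" "L1' (\<phi> t x) = L1'_orbit x t"
    using L1_on_orbit_local[OF x t] by auto
  have "cosh t + e * sinh t = exp (e * t)" using e cosh_plus_sinh[of t] cosh_minus_sinh[of t] by auto
  moreover have "L1 (\<phi> t x) + e * L1' (\<phi> t x) = (L1 x + e * L1' x) * (cosh t + e * sinh t)"
    using L e by (auto simp: L1_orbit_def L1'_orbit_def algebra_simps)
  ultimately show "L1 (\<phi> t x) + e * L1' (\<phi> t x) = (L1 x + e * L1' x) * exp (e * t)" by simp
  have "(L1 (\<phi> t x))\<^sup>2 - (L1' (\<phi> t x))\<^sup>2 = ((L1 x)\<^sup>2 - (L1' x)\<^sup>2) * ((cosh t)\<^sup>2 - (sinh t)\<^sup>2)"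
    using L by (simp add: L1_orbit_def L1'_orbit_def power2_eq_square algebra_simps)
  then show "exit_root (\<phi> t x) = exit_root x" by (simp add: exit_root_def cosh_square_eq algebra_simps)
qed

lemma exit_point_on_orbit:
  assumes x: "x \<in> B" and t: "\<bar>t\<bar> < 2 * tube_time" "(t, x) \<in> \<Gamma>"
    and e: "e = 1 \<or> e = -1" and p: "L1 x + e * L1' x > 0"
  shows "\<phi> (e * exit_time e (\<phi> t x)) (\<phi> t x) = \<phi> (e * exit_time e x) x"
proof -
  note comb = L1_combination_on_orbit[OF x t(1) e]
  have "exit_time e (\<phi> t x) = ln ((\<delta> + exit_root x) / (L1 x + e * L1' x) / exp (e * t))"
    unfolding exit_time_def comb by (simp add: field_simps)
  also have "\<dots> = exit_time e x - e * t"
    using p delta_plus_exit_root_pos[OF x] by (simp add: ln_div ln_mult exit_time_def)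
  finally have "e * exit_time e (\<phi> t x) = e * exit_time e x - t" using e by (auto simp: algebra_simps)
  moreover have "(e * exit_time e x, x) \<in> \<Gamma>"
    using exit_time_props(3)[OF x e p exit_time_props(1)[OF x e p] order_refl] by simp
  ultimately show ?thesis using partial_flow_comp[OF flow t(2), of "e * exit_time e x - t"] by simp
qed

lemma continuous_on_flow_tube_time: "continuous_on B (\<lambda>y. \<phi> tube_time y)"
proof -
  have "continuous_on B ((\<lambda>(t, x). \<phi> t x) \<circ> (\<lambda>y. (tube_time, y)))"
  proof (rule continuous_on_compose)
    show "continuous_on B (\<lambda>y. (tube_time, y))" by (intro continuous_intros)
    have "(\<lambda>y. (tube_time, y)) ` B \<subseteq> \<Gamma>" using tube_time by auto
    then show "continuous_on ((\<lambda>y. (tube_time, y)) ` B) (\<lambda>(t, x). \<phi> t x)"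
      by (rule continuous_on_subset[OF partial_flowD(2)[OF flow]])
  qed
  then show ?thesis by (simp add: o_def)
qed

text \<open>\<open>L1'\<close> is recovered from the values of \<open>L1\<close> at time \<open>tube_time\<close> along the flow.\<close>

lemma continuous_on_L1': "continuous_on B L1'"
proof -
  have T: "\<bar>tube_time\<bar> < 2 * tube_time" using tube_time by simp
  have c1: "continuous_on B (\<lambda>y. L1 (\<phi> tube_time y))"
  proof (rule continuous_on_compose2[OF continuous_L1 continuous_on_flow_tube_time])
    show "(\<lambda>y. \<phi> tube_time y) ` B \<subseteq> N" using tube_time(2)[OF _ T] interior_subset by blast
  qed
  have c2: "continuous_on B L1" using continuous_L1 by (rule continuous_on_subset) auto
  have sh: "sinh tube_time > 0" using tube_time by simp
  have "continuous_on B (\<lambda>y. (L1 (\<phi> tube_time y) - L1 y * cosh tube_time) / sinh tube_time)"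
    using sh by (intro continuous_intros c1 c2) auto
  moreover have "(L1 (\<phi> tube_time y) - L1 y * cosh tube_time) / sinh tube_time = L1' y" if "y \<in> B" for y
    using L1_on_orbit_local[OF that T] sh by (simp add: L1_orbit_def field_simps)
  ultimately show ?thesis using continuous_on_eq by (metis (no_types, lifting))
qed

end

section \<open>The boundary value problem\<close>

locale catenary_bvp = catenary_region +
  fixes a f :: "'a \<Rightarrow> real" and c :: real
  assumes continuous_a: "continuous_on D a"
    and a_lie_deriv: "\<And>x. x \<in> D \<Longrightarrow> has_lie_deriv \<Gamma> \<phi> D a x 0"
    and c_pos: "c > 0" and a_ge_c: "\<And>x. x \<in> D \<Longrightarrow> c \<le> a x"
    and continuous_f: "continuous_on (frontier B) f"
begin

lemma a_pos: "x \<in> D \<Longrightarrow> a x > 0"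
  using a_ge_c c_pos by fastforce

text \<open>On the orbit through \<open>y\<close> a solution is \<open>\<alpha> e\<^sup>a\<^sup>t + \<beta> e\<^sup>-\<^sup>a\<^sup>t\<close>. With the weights
  \<open>P = weight 1 y = e\<^sup>-\<^sup>a\<^sup>\<tau>\<^sup>+\<close>, \<open>Q = weight (-1) y = e\<^sup>-\<^sup>a\<^sup>\<tau>\<^sup>-\<close> (\<open>\<tau>\<^sup>\<pm>\<close> the exit times) the boundary
  conditions at the two exit points read \<open>\<alpha> + \<beta> P\<^sup>2 = P f\<^sub>+\<close> and \<open>\<alpha> Q\<^sup>2 + \<beta> = Q f\<^sub>-\<close>,
  which is solved by \<open>coeff_grow\<close> and \<open>coeff_decay\<close>. If the orbit tends to \<open>\<Lambda>\<close> in
  direction \<open>e\<close>, then \<open>weight e y = 0\<close>, which encodes the boundary value \<open>0\<close> at \<open>\<Lambda>\<close>.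
  \<open>P Q = 1\<close> happens only where the orbit touches \<open>frontier B\<close> tangentially.\<close>

definition weight :: "real \<Rightarrow> 'a \<Rightarrow> real" where
  "weight e y = ((L1 y + e * L1' y) / (\<delta> + exit_root y)) powr a y"
definition exit_value :: "real \<Rightarrow> 'a \<Rightarrow> real" where
  "exit_value e y = f (\<phi> (e * exit_time e y) y)"
definition boundary_term :: "real \<Rightarrow> 'a \<Rightarrow> real" where
  "boundary_term e y = weight e y * exit_value e y"

definition coeff_grow :: "'a \<Rightarrow> real" where
  "coeff_grow y = (boundary_term 1 y - (weight 1 y)\<^sup>2 * boundary_term (-1) y)
  / (1 - (weight 1 y * weight (-1) y)\<^sup>2)"
definition coeff_decay :: "'a \<Rightarrow> real" where
  "coeff_decay y = (boundary_term (-1) y - (weight (-1) y)\<^sup>2 * boundary_term 1 y)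
  / (1 - (weight 1 y * weight (-1) y)\<^sup>2)"
definition two_point_value :: "'a \<Rightarrow> real" where
  "two_point_value y = (boundary_term 1 y * (1 - (weight (-1) y)\<^sup>2)
  + boundary_term (-1) y * (1 - (weight 1 y)\<^sup>2)) / (1 - (weight 1 y * weight (-1) y)\<^sup>2)"

definition L2 :: "'a \<Rightarrow> real" where
  "L2 y = (if y \<in> \<Lambda> then 0
    else if weight 1 y * weight (-1) y = 1 then f y
    else two_point_value y)"
definition L2' :: "'a \<Rightarrow> real" where
  "L2' y = a y * (coeff_grow y - coeff_decay y)"

lemma coeff_grow_plus_decay: "coeff_grow y + coeff_decay y = two_point_value y"
  unfolding coeff_grow_def coeff_decay_def two_point_value_def add_divide_distrib[symmetric]
  by (simp add: algebra_simps)

lemma L2_eq_two_point_value: "y \<in> D \<Longrightarrow> weight 1 y * weight (-1) y \<noteq> 1 \<Longrightarrow> L2 y = two_point_value y"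
  by (simp add: L2_def)

lemma weight_base_nonneg:
  "y \<in> B \<Longrightarrow> e = 1 \<or> e = -1 \<Longrightarrow> (L1 y + e * L1' y) / (\<delta> + exit_root y) \<ge> 0"
  using L1_plus_L1'_nonneg[of y e] delta_plus_exit_root_pos[of y] by simp

lemma weight_nonneg: "weight e y \<ge> 0"
  by (simp add: weight_def)

lemma weight_eq_exp:
  assumes y: "y \<in> B" and e: "e = 1 \<or> e = -1" and p: "L1 y + e * L1' y > 0"
  shows "weight e y = exp (- a y * exit_time e y)"
proof -
  have "(L1 y + e * L1' y) / (\<delta> + exit_root y) = exp (- exit_time e y)"
    unfolding exit_time_def using p delta_plus_exit_root_pos[OF y] by (simp add: exp_minus)
  then show ?thesis by (simp add: weight_def exp_powr_real)
qed

lemma weight_eq_0: "L1 y + e * L1' y = 0 \<Longrightarrow> weight e y = 0"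
  by (simp add: weight_def)

lemma weight_cases:
  assumes "y \<in> B" "e = 1 \<or> e = -1"
  obtains "L1 y + e * L1' y > 0" "weight e y = exp (- a y * exit_time e y)"
  | "L1 y + e * L1' y = 0" "weight e y = 0"
  using weight_eq_exp[OF assms] weight_eq_0 L1_plus_L1'_nonneg[OF assms] by fastforce

lemma weight_pos_iff: "y \<in> B \<Longrightarrow> e = 1 \<or> e = -1 \<Longrightarrow> weight e y > 0 \<longleftrightarrow> L1 y + e * L1' y > 0"
  by (rule weight_cases[of y e]) auto

lemma weight_le_1:
  assumes y: "y \<in> D" and e: "e = 1 \<or> e = -1"
  shows "weight e y \<le> 1"
proof (rule weight_cases[of y e])
  assume "L1 y + e * L1' y > 0" "weight e y = exp (- a y * exit_time e y)"
  then show ?thesis using exit_time_props(1)[of y e] a_pos[OF y] y e by simp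
qed (use y e in simp_all)

lemma orbit_before_exit:
  assumes x: "x \<in> B" and t: "\<bar>t\<bar> < 2 * tube_time" "\<phi> t x \<in> B"
    and e: "e = 1 \<or> e = -1" and p: "L1 x + e * L1' x > 0"
  shows "e * t \<le> exit_time e x"
proof (cases "e * t \<ge> 0")
  case True
  have "L1_orbit x t \<le> \<delta>" using L1_on_orbit_local[OF x t(1)] t(2) by simp
  then have "L1_orbit x (e * (e * t)) \<le> \<delta>" using e by auto
  then show ?thesis using exit_time_props(2)[OF x e p True] by simp
qed (use exit_time_props(1)[OF x e p] in simp)

lemma orbit_segment_in_D:
  assumes x: "x \<in> D" and t: "\<bar>t\<bar> < 2 * tube_time" "\<phi> t x \<in> B"
    and s: "s \<in> {min 0 t..max 0 t}"
  shows "(s, x) \<in> \<Gamma> \<and> \<phi> s x \<in> D"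
proof -
  have xB: "x \<in> B" using x by simp
  define e :: real where "e = (if t \<ge> 0 then 1 else -1)"
  have e: "e = 1 \<or> e = -1" by (simp add: e_def)
  have es: "0 \<le> e * s" "e * s \<le> e * t" and ee: "e * (e * s) = s"
    using s by (auto simp: e_def)
  have "(s, x) \<in> \<Gamma> \<and> \<phi> s x \<in> B"
  proof (cases "L1 x + e * L1' x > 0")
    case True
    then have "e * s \<le> exit_time e x" using orbit_before_exit[OF xB t e] es by simp
    then show ?thesis using exit_time_props(3)[OF xB e True es(1)] ee by simp
  next
    case False
    then have "L1 x + e * L1' x = 0" using L1_plus_L1'_nonneg[OF xB e] by simp
    then show ?thesis using orbit_stays_in_B[OF xB e _ es(1)] ee by simp
  qed
  then show ?thesis using orbit_notin_Lambda[of x s] x by auto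
qed

lemma a_constant_on_orbit:
  assumes x: "x \<in> D" and seg: "\<And>s. s \<in> {min 0 t..max 0 t} \<Longrightarrow> (s, x) \<in> \<Gamma> \<and> \<phi> s x \<in> D"
  shows "a (\<phi> t x) = a x"
proof (cases "t = 0")
  case False
  let ?lo = "min 0 t" and ?hi = "max 0 t" and ?g = "\<lambda>s. a (\<phi> s x)"
  have lh: "?lo < ?hi" using False by auto
  have cont: "continuous_on {?lo..?hi} ?g"
  proof (rule continuous_on_compose2[OF continuous_a])
    show "continuous_on {?lo..?hi} (\<lambda>s. \<phi> s x)"
      by (rule continuous_on_subset[OF continuous_on_orbit[OF flow]]) (use seg in auto)
  qed (use seg in auto)
  have der: "(?g has_real_derivative 0) (at s)" if "?lo < s" "s < ?hi" for s
    by (rule has_real_derivative_orbit[OF flow, of "{?lo<..<?hi}" s x D a 0])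
      (use that seg a_lie_deriv in auto)
  have "?g t = ?g ?lo" "?g 0 = ?g ?lo" by (rule DERIV_isconst2[OF lh cont der]; simp)+
  then show ?thesis by simp
qed simp

lemma orbit_shift:
  assumes x: "x \<in> D" and t: "\<bar>t\<bar> < 2 * tube_time" "(t, x) \<in> \<Gamma>" "\<phi> t x \<in> B"
    and e: "e = 1 \<or> e = -1"
  shows "\<phi> t x \<in> D" "a (\<phi> t x) = a x"
    "weight e (\<phi> t x) = weight e x * exp (e * (a x * t))"
    "boundary_term e (\<phi> t x) = boundary_term e x * exp (e * (a x * t))"
proof -
  let ?y = "\<phi> t x"
  have xB: "x \<in> B" using x by simp
  note seg = orbit_segment_in_D[OF x t(1,3)]
  show "?y \<in> D" using seg[of t] by simp
  show ay: "a ?y = a x" by (rule a_constant_on_orbit[OF x seg])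
  note comb = L1_combination_on_orbit[OF xB t(1) e]
  show W: "weight e ?y = weight e x * exp (e * (a x * t))"
  proof -
    have "weight e ?y = ((L1 x + e * L1' x) / (\<delta> + exit_root x) * exp (e * t)) powr a x"
      unfolding weight_def comb ay by (simp add: field_simps)
    also have "\<dots> = weight e x * exp (e * t) powr a x"
      using weight_base_nonneg[OF xB e] by (subst powr_mult) (auto simp: weight_def)
    finally show ?thesis by (simp add: exp_powr_real mult_ac)
  qed
  show "boundary_term e ?y = boundary_term e x * exp (e * (a x * t))"
  proof (rule weight_cases[OF xB e])
    assume "L1 x + e * L1' x > 0"
    then have "exit_value e ?y = exit_value e x"
      using exit_point_on_orbit[OF xB t(1,2) e] by (simp add: exit_value_def)
    then show ?thesis using W by (simp add: boundary_term_def)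
  qed (simp add: boundary_term_def W)
qed

lemma tangent_point:
  assumes x: "x \<in> D" and pq: "weight 1 x * weight (-1) x = 1" and e: "e = 1 \<or> e = -1"
  shows "weight e x = 1" "L1 x + e * L1' x > 0" "exit_time e x = 0"
proof -
  have xB: "x \<in> B" using x by simp
  have "weight 1 x \<le> 1" "weight (-1) x \<le> 1" using weight_le_1[OF x] by auto
  then have "weight 1 x * weight (-1) x \<le> weight 1 x" "weight 1 x * weight (-1) x \<le> weight (-1) x"
    using weight_nonneg by (auto intro: mult_left_le mult_left_le_one_le)
  then have "weight 1 x = 1 \<and> weight (-1) x = 1"
    using pq \<open>weight 1 x \<le> 1\<close> \<open>weight (-1) x \<le> 1\<close> by linarith
  then show w: "weight e x = 1" using e by auto
  then show p: "L1 x + e * L1' x > 0" using weight_pos_iff[OF xB e] by simp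
  have "exp (- a x * exit_time e x) = 1" using weight_eq_exp[OF xB e p] w by simp
  then show "exit_time e x = 0" using a_pos[OF x] by simp
qed

text \<open>At a tangent point the orbit leaves \<open>D\<close> immediately in both directions, so every
  Lie derivative along \<open>D\<close> exists there: the filter is trivial.\<close>

lemma has_lie_deriv_at_tangent_point:
  assumes x: "x \<in> D" and pq: "weight 1 x * weight (-1) x = 1"
  shows "has_lie_deriv \<Gamma> \<phi> D F x l"
proof -
  let ?S = "{t. (t, x) \<in> \<Gamma> \<and> \<phi> t x \<in> D}"
  have xB: "x \<in> B" using x by simp
  have "\<not> 0 islimpt ?S"
  proof
    assume "0 islimpt ?S"
    moreover have "2 * tube_time > 0" using tube_time(1) by simp
    ultimately obtain t where t: "t \<in> ?S" "t \<noteq> 0" "dist t 0 < 2 * tube_time"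
      unfolding islimpt_approachable by blast
    then have tt: "\<bar>t\<bar> < 2 * tube_time" "\<phi> t x \<in> B" by auto
    have "1 * t \<le> exit_time 1 x"
      using orbit_before_exit[OF xB tt, of 1] tangent_point(2)[OF x pq, of 1] by simp
    moreover have "(-1) * t \<le> exit_time (-1) x"
      using orbit_before_exit[OF xB tt, of "-1"] tangent_point(2)[OF x pq, of "-1"] by simp
    ultimately show False
      using tangent_point(3)[OF x pq, of 1] tangent_point(3)[OF x pq, of "-1"] t(2) by simp
  qed
  then have "trivial_limit (at 0 within ?S)" using trivial_limit_within by blast
  then have "at 0 within ?S = bot" unfolding trivial_limit_def .
  then show ?thesis unfolding has_lie_deriv_def by simp
qed

lemma coeff_orbit_shift:
  assumes x: "x \<in> D" and t: "\<bar>t\<bar> < 2 * tube_time" "(t, x) \<in> \<Gamma>" "\<phi> t x \<in> B"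
  shows "weight 1 (\<phi> t x) * weight (-1) (\<phi> t x) = weight 1 x * weight (-1) x"
    "coeff_grow (\<phi> t x) = coeff_grow x * exp (a x * t)"
    "coeff_decay (\<phi> t x) = coeff_decay x * exp (- (a x * t))"
proof -
  let ?y = "\<phi> t x" and ?E = "exp (a x * t)"
  have E0: "?E \<noteq> 0" by simp
  have w1: "weight 1 ?y = weight 1 x * ?E" and b1: "boundary_term 1 ?y = boundary_term 1 x * ?E"
    using orbit_shift(3,4)[OF x t, of 1] by simp_all
  have w2: "weight (-1) ?y = weight (-1) x * inverse ?E"
    and b2: "boundary_term (-1) ?y = boundary_term (-1) x * inverse ?E"
    using orbit_shift(3,4)[OF x t, of "-1"] by (simp_all add: exp_minus)
  show pq: "weight 1 ?y * weight (-1) ?y = weight 1 x * weight (-1) x"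
    unfolding w1 w2 using E0 by simp
  have "boundary_term 1 ?y - (weight 1 ?y)\<^sup>2 * boundary_term (-1) ?y
      = (boundary_term 1 x - (weight 1 x)\<^sup>2 * boundary_term (-1) x) * ?E"
    unfolding w1 b1 b2 using E0 by (simp add: power2_eq_square field_simps)
  then show "coeff_grow ?y = coeff_grow x * ?E" by (simp add: coeff_grow_def pq)
  have "boundary_term (-1) ?y - (weight (-1) ?y)\<^sup>2 * boundary_term 1 ?y
      = (boundary_term (-1) x - (weight (-1) x)\<^sup>2 * boundary_term 1 x) * inverse ?E"
    unfolding w2 b1 b2 using E0 by (simp add: power2_eq_square field_simps)
  then show "coeff_decay ?y = coeff_decay x * exp (- (a x * t))" by (simp add: coeff_decay_def pq exp_minus)
qed

lemma has_lie_deriv_L2: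
  assumes x: "x \<in> D"
  shows "has_lie_deriv \<Gamma> \<phi> D L2 x (L2' x) \<and> has_lie_deriv \<Gamma> \<phi> D L2' x ((a x)\<^sup>2 * L2 x)"
proof (cases "weight 1 x * weight (-1) x = 1")
  case True
  then show ?thesis using has_lie_deriv_at_tangent_point[OF x] by blast
next
  case nt: False
  let ?S = "{t. (t, x) \<in> \<Gamma> \<and> \<phi> t x \<in> D}"
  define w where "w t = coeff_grow x * exp (a x * t) + coeff_decay x * exp (- (a x * t))" for t
  define w' where "w' t = a x * (coeff_grow x * exp (a x * t) - coeff_decay x * exp (- (a x * t)))" for t
  have "(w has_real_derivative coeff_grow x * (exp (a x * 0) * a x) + coeff_decay x * (exp (- (a x * 0)) * - a x))
      (at 0)" unfolding w_def by (auto intro!: derivative_eq_intros)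
  then have dw: "(w has_real_derivative L2' x) (at 0)" by (simp add: L2'_def algebra_simps)
  have "(w' has_real_derivative a x * (coeff_grow x * (exp (a x * 0) * a x)
      - coeff_decay x * (exp (- (a x * 0)) * - a x))) (at 0)"
    unfolding w'_def by (auto intro!: derivative_eq_intros)
  then have dw': "(w' has_real_derivative (a x)\<^sup>2 * L2 x) (at 0)"
    using x nt by (simp add: L2_eq_two_point_value coeff_grow_plus_decay[symmetric] power2_eq_square algebra_simps)
  have on_orbit: "L2 (\<phi> t x) = w t \<and> L2' (\<phi> t x) = w' t" if "\<bar>t\<bar> < 2 * tube_time" "t \<in> ?S" for t
  proof -
    have t: "\<bar>t\<bar> < 2 * tube_time" "(t, x) \<in> \<Gamma>" "\<phi> t x \<in> B" using that by auto
    note sh = coeff_orbit_shift[OF x t]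
    show ?thesis using nt sh orbit_shift(1,2)[OF x t, of 1]
      by (simp add: L2_eq_two_point_value L2'_def w_def w'_def coeff_grow_plus_decay[symmetric])
  qed
  have r: "2 * tube_time > 0" using tube_time(1) by simp
  have "((\<lambda>t. (L2 (\<phi> t x) - L2 (\<phi> 0 x)) / t) \<longlongrightarrow> L2' x) (at 0 within ?S)"
  proof (rule tendsto_difference_quotient_eq_on[OF dw r])
    show "L2 (\<phi> t x) = w t" if "\<bar>t\<bar> < 2 * tube_time" "t \<in> ?S" for t
      using on_orbit[OF that] by simp
    show "L2 (\<phi> 0 x) = w 0"
      using x nt by (simp add: w_def L2_eq_two_point_value coeff_grow_plus_decay[symmetric])
  qed
  moreover have "((\<lambda>t. (L2' (\<phi> t x) - L2' (\<phi> 0 x)) / t) \<longlongrightarrow> (a x)\<^sup>2 * L2 x) (at 0 within ?S)"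
  proof (rule tendsto_difference_quotient_eq_on[OF dw' r])
    show "L2' (\<phi> t x) = w' t" if "\<bar>t\<bar> < 2 * tube_time" "t \<in> ?S" for t
      using on_orbit[OF that] by simp
    show "L2' (\<phi> 0 x) = w' 0" by (simp add: L2'_def w'_def)
  qed
  ultimately show ?thesis unfolding has_lie_deriv_def by simp
qed

lemma continuous_on_exit_root: "continuous_on B exit_root"
  unfolding exit_root_def
  by (intro continuous_intros continuous_on_L1' continuous_on_subset[OF continuous_L1]) auto

lemma continuous_on_weight_base: "continuous_on B (\<lambda>y. (L1 y + e * L1' y) / (\<delta> + exit_root y))"
proof -
  have "\<forall>y\<in>B. \<delta> + exit_root y \<noteq> 0" using delta_plus_exit_root_pos by (metis less_irrefl)
  then show ?thesis
    by (intro continuous_intros continuous_on_L1' continuous_on_exit_root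
      continuous_on_subset[OF continuous_L1]) auto
qed

lemma weight_tendsto:
  assumes x: "x \<in> D" and e: "e = 1 \<or> e = -1"
  shows "(weight e \<longlongrightarrow> weight e x) (at x within D)"
proof -
  have "((\<lambda>y. (L1 y + e * L1' y) / (\<delta> + exit_root y)) \<longlongrightarrow> (L1 x + e * L1' x) / (\<delta> + exit_root x))
      (at x within D)"
    using continuous_on_weight_base[of e] x unfolding continuous_on_def
    by (auto intro: tendsto_within_subset)
  moreover have "(a \<longlongrightarrow> a x) (at x within D)" using continuous_a x unfolding continuous_on_def by auto
  moreover have "eventually (\<lambda>y. (L1 y + e * L1' y) / (\<delta> + exit_root y) \<ge> 0) (at x within D)"
    unfolding eventually_at_filter using weight_base_nonneg[OF _ e] by (auto intro!: always_eventually)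
  ultimately show ?thesis unfolding weight_def[abs_def]
    using tendsto_powr' a_pos[OF x] by blast
qed

lemma exit_value_tendsto:
  assumes x: "x \<in> D" and e: "e = 1 \<or> e = -1" and p: "L1 x + e * L1' x > 0"
  shows "(exit_value e \<longlongrightarrow> exit_value e x) (at x within D)"
proof -
  let ?E = "{y \<in> B. L1 y + e * L1' y > 0}"
  have xB: "x \<in> B" using x by simp
  have "continuous_on B (\<lambda>y. L1 y + e * L1' y)"
    by (intro continuous_intros continuous_on_L1' continuous_on_subset[OF continuous_L1]) auto
  then have L: "((\<lambda>y. L1 y + e * L1' y) \<longlongrightarrow> L1 x + e * L1' x) (at x within D)"
    using x unfolding continuous_on_def by (auto intro: tendsto_within_subset)
  then have "eventually (\<lambda>y. L1 y + e * L1' y > 0) (at x within D)" using p by (rule order_tendstoD(1))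
  then have evE: "eventually (\<lambda>y. y \<in> ?E) (at x within D)"
    by (auto simp: eventually_at_filter elim: eventually_mono)
  have "(exit_root \<longlongrightarrow> exit_root x) (at x within D)"
    using continuous_on_exit_root x unfolding continuous_on_def by (auto intro: tendsto_within_subset)
  then have "(exit_time e \<longlongrightarrow> exit_time e x) (at x within D)" unfolding exit_time_def[abs_def]
    by (intro tendsto_intros L) (use p delta_plus_exit_root_pos[OF xB] in auto)
  then have pair: "((\<lambda>y. (e * exit_time e y, y)) \<longlongrightarrow> (e * exit_time e x, x)) (at x within D)"
    by (intro tendsto_intros)
  have exits: "(e * exit_time e y, y) \<in> \<Gamma> \<and> \<phi> (e * exit_time e y) y \<in> frontier B" if "y \<in> ?E" for y
    using that exit_time_props(3)[OF _ e _ exit_time_props(1)[OF _ e] order_refl, of y]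
      exit_time_props(5)[OF _ e, of y] by auto
  have xE: "x \<in> ?E" using xB p by simp
  have evG: "eventually (\<lambda>y. (e * exit_time e y, y) \<in> \<Gamma> \<and> \<phi> (e * exit_time e y) y \<in> frontier B)
      (at x within D)"
    using evE by (rule eventually_mono) (rule exits)
  have "((\<lambda>y. \<phi> (e * exit_time e y) y) \<longlongrightarrow> \<phi> (e * exit_time e x) x) (at x within D)"
    using continuous_on_tendsto_compose[OF partial_flowD(2)[OF flow] pair] exits[OF xE]
      eventually_mono[OF evG] by simp
  then show ?thesis unfolding exit_value_def[abs_def]
    by (rule continuous_on_tendsto_compose[OF continuous_f _ exits[OF xE, THEN conjunct2]])
      (use evG in \<open>auto elim: eventually_mono\<close>)
qed

lemma f_bounded:
  obtains M where "M > 0" "\<And>z. z \<in> frontier B \<Longrightarrow> \<bar>f z\<bar> \<le> M"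
proof -
  have "frontier B \<subseteq> B" using closed_B by (simp add: frontier_subset_closed)
  then have "compact (frontier B)"
    using compact_Int_closed[OF compact_B frontier_closed[of B]] by (simp add: Int_absorb1)
  then have "bounded (f ` frontier B)" by (intro compact_imp_bounded compact_continuous_image continuous_f)
  then show ?thesis using that unfolding bounded_pos by auto
qed

lemma abs_boundary_term_le:
  assumes y: "y \<in> D" and e: "e = 1 \<or> e = -1" and M: "\<And>z. z \<in> frontier B \<Longrightarrow> \<bar>f z\<bar> \<le> M"
  shows "\<bar>boundary_term e y\<bar> \<le> M * weight e y"
proof (rule weight_cases[of y e])
  assume "L1 y + e * L1' y > 0"
  then have "\<bar>exit_value e y\<bar> \<le> M" unfolding exit_value_def using y e by (intro M exit_time_props(5)) auto
  then have "weight e y * \<bar>exit_value e y\<bar> \<le> weight e y * M"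
    using weight_nonneg by (rule mult_left_mono)
  then show ?thesis using weight_nonneg[of e y] by (simp add: boundary_term_def abs_mult mult.commute)
qed (use y e in \<open>simp_all add: boundary_term_def\<close>)

lemma boundary_term_tendsto:
  assumes x: "x \<in> D" and e: "e = 1 \<or> e = -1"
  shows "(boundary_term e \<longlongrightarrow> boundary_term e x) (at x within D)"
proof (rule weight_cases[of x e])
  assume "L1 x + e * L1' x > 0"
  then show ?thesis unfolding boundary_term_def[abs_def]
    by (intro tendsto_mult weight_tendsto[OF x e] exit_value_tendsto[OF x e])
next
  assume w0: "weight e x = 0"
  obtain M where M: "\<And>z. z \<in> frontier B \<Longrightarrow> \<bar>f z\<bar> \<le> M" using f_bounded by blast
  have "(boundary_term e \<longlongrightarrow> 0) (at x within D)"
  proof (rule Lim_null_comparison)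
    show "eventually (\<lambda>y. norm (boundary_term e y) \<le> M * weight e y) (at x within D)"
      unfolding eventually_at_filter using abs_boundary_term_le[OF _ e M] by (auto intro!: always_eventually)
    show "((\<lambda>y. M * weight e y) \<longlongrightarrow> 0) (at x within D)"
      using tendsto_mult[OF tendsto_const weight_tendsto[OF x e], of M] w0 by simp
  qed
  then show ?thesis using w0 by (simp add: boundary_term_def)
qed (use x e in simp_all)

lemma L2_tendsto_nontangent:
  assumes x: "x \<in> D" and pq: "weight 1 x * weight (-1) x \<noteq> 1"
  shows "(L2 \<longlongrightarrow> L2 x) (at x within D)"
proof -
  have "1 - (weight 1 x * weight (-1) x)\<^sup>2 \<noteq> 0"
    using unit_interval_mult_ne_one(3)[OF weight_nonneg weight_le_1[OF x] weight_nonneg weight_le_1[OF x] pq]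
    by simp
  then have L: "(two_point_value \<longlongrightarrow> two_point_value x) (at x within D)"
    unfolding two_point_value_def[abs_def]
    by (intro tendsto_intros weight_tendsto[OF x] boundary_term_tendsto[OF x]) auto
  have "eventually (\<lambda>y. weight 1 y * weight (-1) y \<noteq> 1) (at x within D)"
    using tendsto_imp_eventually_ne[OF tendsto_mult[OF weight_tendsto weight_tendsto] pq] x by simp
  moreover have "eventually (\<lambda>y. y \<in> D) (at x within D)" by (simp add: eventually_at_filter)
  ultimately have "eventually (\<lambda>y. two_point_value y = L2 y) (at x within D)"
    by (rule eventually_elim2) (simp add: L2_eq_two_point_value)
  then show ?thesis using Lim_transform_eventually[OF L] L2_eq_two_point_value[OF x pq] by simp
qed

lemma tangent_point_values:
  assumes x: "x \<in> D" and pq: "weight 1 x * weight (-1) x = 1" and e: "e = 1 \<or> e = -1"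
  shows "exit_value e x = f x" "L2 x = f x"
  using tangent_point(3)[OF x pq e] x pq by (simp_all add: exit_value_def L2_def)

lemma L2_tendsto_tangent:
  assumes x: "x \<in> D" and pq: "weight 1 x * weight (-1) x = 1"
  shows "(L2 \<longlongrightarrow> L2 x) (at x within D)"
proof -
  let ?bound = "\<lambda>y. \<bar>exit_value 1 y - f x\<bar> + \<bar>exit_value (-1) y - f x\<bar> + (1 - weight 1 y) * \<bar>f x\<bar>"
  have bound: "\<bar>L2 y - f x\<bar> \<le> ?bound y" if y: "y \<in> D" for y
  proof (cases "weight 1 y * weight (-1) y = 1")
    case True
    have "L2 y = f y" "exit_value 1 y = f y" "exit_value (-1) y = f y"
      using tangent_point_values[OF y True] by auto
    moreover have "(1 - weight 1 y) * \<bar>f x\<bar> \<ge> 0" using weight_le_1[OF y, of 1] by simp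
    ultimately show ?thesis by simp
  next
    case False
    then show ?thesis
      using two_point_formula_dist_le[OF weight_nonneg weight_le_1[OF y] weight_nonneg weight_le_1[OF y] False,
        of "exit_value 1 y" "exit_value (-1) y" "f x"]
      by (simp add: L2_eq_two_point_value[OF y False] two_point_value_def boundary_term_def mult_ac)
  qed
  have "(exit_value e \<longlongrightarrow> f x) (at x within D)" if e: "e = 1 \<or> e = -1" for e
    using exit_value_tendsto[OF x e tangent_point(2)[OF x pq e]] tangent_point_values(1)[OF x pq e] by simp
  then have "(?bound \<longlongrightarrow> \<bar>f x - f x\<bar> + \<bar>f x - f x\<bar> + (1 - weight 1 x) * \<bar>f x\<bar>) (at x within D)"
    by (intro tendsto_intros weight_tendsto[OF x]) auto
  then have "(?bound \<longlongrightarrow> 0) (at x within D)" using tangent_point(1)[OF x pq, of 1] by simp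
  then have "((\<lambda>y. L2 y - f x) \<longlongrightarrow> 0) (at x within D)"
    by (rule Lim_null_comparison[rotated])
      (use bound in \<open>auto simp: eventually_at_filter intro!: always_eventually\<close>)
  then show ?thesis using tangent_point_values(2)[OF x pq, of 1] by (simp add: LIM_zero_cancel)
qed

lemma weight_le_powr:
  assumes y: "y \<in> D" and e: "e = 1 \<or> e = -1" and small: "L1 y < \<delta> / 2"
  shows "weight e y \<le> (2 * L1 y / \<delta>) powr c"
proof -
  have yB: "y \<in> B" using y by simp
  have L0: "L1 y \<ge> 0" using L1_nonneg y by auto
  have "L1 y + e * L1' y \<le> 2 * L1 y" using abs_L1'_le[OF yB] e by auto
  moreover have "\<delta> \<le> \<delta> + exit_root y" using exit_root_nonneg[OF yB] by simp
  ultimately have "(L1 y + e * L1' y) / (\<delta> + exit_root y) \<le> 2 * L1 y / \<delta>"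
    using delta_pos L0 L1_plus_L1'_nonneg[OF yB e] by (intro frac_le) auto
  then have "weight e y \<le> (2 * L1 y / \<delta>) powr a y"
    unfolding weight_def using a_pos[OF y] weight_base_nonneg[OF yB e] by (intro powr_mono2) auto
  also have "\<dots> \<le> (2 * L1 y / \<delta>) powr c"
    using a_ge_c[OF y] L0 delta_pos small by (intro powr_mono') auto
  finally show ?thesis .
qed

lemma L2_tendsto_Lambda:
  assumes x: "x \<in> \<Lambda>"
  shows "(L2 \<longlongrightarrow> L2 x) (at x within B)"
proof -
  obtain M where M: "M > 0" "\<And>z. z \<in> frontier B \<Longrightarrow> \<bar>f z\<bar> \<le> M" using f_bounded by blast
  define g where "g y = 2 * M * (2 * L1 y / \<delta>) powr c" for y
  have xB: "x \<in> B" using x Lambda_subset_B by auto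
  have "(L1 \<longlongrightarrow> L1 x) (at x within N)" using continuous_L1 xB unfolding continuous_on_def by simp
  then have "(L1 \<longlongrightarrow> L1 x) (at x within B)" by (rule tendsto_within_subset) auto
  then have L1_0: "(L1 \<longlongrightarrow> 0) (at x within B)" using L1_Lambda[OF x] by simp
  have "(g \<longlongrightarrow> 2 * M * (2 * 0 / \<delta>) powr c) (at x within B)"
    unfolding g_def using c_pos L1_nonneg delta_pos
    by (intro tendsto_intros L1_0) (auto simp: eventually_at_filter intro!: always_eventually)
  then have g0: "(g \<longlongrightarrow> 0) (at x within B)" by simp
  have bound: "\<bar>L2 y\<bar> \<le> g y" if y: "y \<in> B" and small: "L1 y < \<delta> / 2" for y
  proof (cases "y \<in> \<Lambda>")
    case False
    then have yD: "y \<in> D" using y by simp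
    have nt: "weight 1 y * weight (-1) y \<noteq> 1"
    proof
      assume "weight 1 y * weight (-1) y = 1"
      then have "L1_orbit y (1 * exit_time 1 y) = L1 y"
        using tangent_point(3)[OF yD _, of 1] by (simp add: L1_orbit_def)
      then show False
        using exit_time_props(4)[OF y _ tangent_point(2)[OF yD \<open>_ = 1\<close>, of 1]] small delta_pos by simp
    qed
    have "\<bar>L2 y\<bar> \<le> \<bar>boundary_term 1 y\<bar> + \<bar>boundary_term (-1) y\<bar>"
      using L2_eq_two_point_value[OF yD nt] two_point_formula_abs_le[OF weight_nonneg weight_le_1[OF yD]
        weight_nonneg weight_le_1[OF yD] nt] by (simp add: two_point_value_def)
    also have "\<dots> \<le> M * weight 1 y + M * weight (-1) y"
      using abs_boundary_term_le[OF yD _ M(2)] by (intro add_mono) auto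
    also have "\<dots> \<le> M * (2 * L1 y / \<delta>) powr c + M * (2 * L1 y / \<delta>) powr c"
      using weight_le_powr[OF yD _ small] M(1) by (intro add_mono mult_left_mono) auto
    finally show ?thesis by (simp add: g_def)
  qed (use M(1) in \<open>simp add: L2_def g_def\<close>)
  have "eventually (\<lambda>y. L1 y < \<delta> / 2) (at x within B)"
    using order_tendstoD(2)[OF L1_0, of "\<delta> / 2"] delta_pos by simp
  moreover have "eventually (\<lambda>y. y \<in> B) (at x within B)" by (simp add: eventually_at_filter)
  ultimately have "eventually (\<lambda>y. norm (L2 y) \<le> g y) (at x within B)"
    by (rule eventually_elim2) (use bound in auto)
  then have "(L2 \<longlongrightarrow> 0) (at x within B)" by (rule Lim_null_comparison[OF _ g0])
  then show ?thesis using x by (simp add: L2_def)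
qed

lemma continuous_on_L2: "continuous_on B L2"
  unfolding continuous_on_def
proof
  fix x assume x: "x \<in> B"
  show "(L2 \<longlongrightarrow> L2 x) (at x within B)"
  proof (cases "x \<in> \<Lambda>")
    case False
    then have "at x within B = at x within D"
      by (intro at_within_nhd[of x "- \<Lambda>"]) (use x closed_Lambda in auto)
    then show ?thesis using L2_tendsto_tangent L2_tendsto_nontangent x False by (cases "weight 1 x * weight (-1) x = 1") auto
  qed (rule L2_tendsto_Lambda)
qed

lemma L2_frontier:
  assumes xf: "x \<in> frontier B"
  shows "L2 x = f x"
proof -
  have xB: "x \<in> B" and Lx: "L1 x = \<delta>" using frontier_BD[OF xf] by auto
  have xD: "x \<in> D" using xB Lx L1_Lambda delta_pos by force
  define e :: real where "e = (if L1' x \<ge> 0 then 1 else -1)"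
  have e: "e = 1 \<or> e = -1" by (simp add: e_def)
  have p: "L1 x + e * L1' x > 0" using Lx delta_pos by (simp add: e_def)
  have "exit_root x = L1 x + e * L1' x - \<delta>" using Lx by (simp add: exit_root_def e_def)
  then have "exit_time e x = 0" using p by (simp add: exit_time_def)
  then have w: "weight e x = 1" and v: "exit_value e x = f x"
    using weight_eq_exp[OF xB e p] by (simp_all add: exit_value_def)
  show ?thesis
  proof (cases "weight 1 x * weight (-1) x = 1")
    case False
    then have "weight (-e) x \<noteq> 1" using w e by auto
    moreover have "weight (-e) x \<le> 1" using weight_le_1[OF xD, of "-e"] e by auto
    ultimately have "1 - (weight (-e) x)\<^sup>2 > 0" using one_minus_square_pos[OF weight_nonneg] by simp
    then have "1 - (weight (-e) x)\<^sup>2 \<noteq> 0" by simp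
    then show ?thesis using L2_eq_two_point_value[OF xD False] e w v
      by (auto simp: two_point_value_def boundary_term_def)
  qed (use xD in \<open>simp add: L2_def\<close>)
qed

lemma boundary_term_pos:
  assumes fpos: "\<And>z. z \<in> frontier B \<Longrightarrow> f z > 0" and y: "y \<in> D" and e: "e = 1 \<or> e = -1"
  shows "boundary_term e y \<ge> 0" "weight e y > 0 \<Longrightarrow> boundary_term e y > 0"
proof -
  have yB: "y \<in> B" using y by simp
  have "weight e y > 0 \<Longrightarrow> exit_value e y > 0"
    using weight_pos_iff[OF yB e] fpos exit_time_props(5)[OF yB e] by (simp add: exit_value_def)
  then show "weight e y > 0 \<Longrightarrow> boundary_term e y > 0" by (simp add: boundary_term_def)
  then show "boundary_term e y \<ge> 0"
    using weight_nonneg[of e y] by (cases "weight e y > 0") (auto simp: boundary_term_def)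
qed

lemma L2_pos:
  assumes fpos: "\<And>z. z \<in> frontier B \<Longrightarrow> f z > 0" and x: "x \<in> D"
  shows "L2 x > 0"
proof (cases "weight 1 x * weight (-1) x = 1")
  case True
  have xB: "x \<in> B" using x by simp
  have "\<phi> (1 * exit_time 1 x) x \<in> frontier B"
    using exit_time_props(5)[OF xB _ tangent_point(2)[OF x True, of 1]] by simp
  then have "x \<in> frontier B" using tangent_point(3)[OF x True, of 1] by simp
  then show ?thesis using tangent_point_values(2)[OF x True, of 1] fpos by simp
next
  case False
  let ?P = "weight 1 x" and ?Q = "weight (-1) x"
  note bt = boundary_term_pos[OF fpos x]
  have "L1 x > 0" using L1_pos x by auto
  then have "?P > 0 \<or> ?Q > 0" using weight_pos_iff[of x 1] weight_pos_iff[of x "-1"] x by auto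
  then have "(?P > 0 \<and> ?Q < 1) \<or> (?Q > 0 \<and> ?P < 1)"
    using False weight_le_1[OF x, of 1] weight_le_1[OF x, of "-1"] weight_nonneg[of 1 x]
    by (smt (verit) mult_cancel_right1)
  then have "boundary_term 1 x * (1 - ?Q\<^sup>2) + boundary_term (-1) x * (1 - ?P\<^sup>2) > 0"
    using bt[of 1] bt[of "-1"] one_minus_square_pos[OF weight_nonneg, of 1 x]
      one_minus_square_pos[OF weight_nonneg, of "-1" x] weight_le_1[OF x, of 1] weight_le_1[OF x, of "-1"]
    by (auto intro: add_pos_nonneg add_nonneg_pos simp: power_le_one)
  moreover have "1 - (?P * ?Q)\<^sup>2 > 0"
    using unit_interval_mult_ne_one(3)[OF weight_nonneg weight_le_1[OF x] weight_nonneg weight_le_1[OF x] False]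
    by simp
  ultimately show ?thesis using L2_eq_two_point_value[OF x False] by (simp add: two_point_value_def)
qed

definition bvp_solution :: "('a \<Rightarrow> real) \<Rightarrow> bool" where
  "bvp_solution u \<longleftrightarrow> continuous_on B u \<and> (\<forall>x\<in>\<Lambda>. u x = 0) \<and>
  second_lie_deriv_eq \<Gamma> \<phi> D u (\<lambda>x. (a x)\<^sup>2 * u x) \<and> (\<forall>x\<in>frontier B. u x = f x)"

lemma bvp_solution_L2: "bvp_solution L2"
  unfolding bvp_solution_def second_lie_deriv_eq_def
proof (intro conjI)
  show "\<exists>L'. (\<forall>x\<in>D. has_lie_deriv \<Gamma> \<phi> D L2 x (L' x)) \<and> (\<forall>x\<in>D. has_lie_deriv \<Gamma> \<phi> D L' x ((a x)\<^sup>2 * L2 x))"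
    using has_lie_deriv_L2 by blast
qed (use continuous_on_L2 L2_frontier in \<open>auto simp: L2_def\<close>)

lemma has_real_derivative_interior_orbit:
  assumes u: "\<forall>x\<in>D. has_lie_deriv \<Gamma> \<phi> D u x (u' x)"
    and s: "s \<in> {t. (t, m) \<in> \<Gamma> \<and> \<phi> t m \<in> interior B - \<Lambda>}"
  shows "((\<lambda>t. u (\<phi> t m)) has_real_derivative u' (\<phi> s m)) (at s)"
proof (rule has_real_derivative_orbit[where D = D, OF flow _ s])
  show "open {t. (t, m) \<in> \<Gamma> \<and> \<phi> t m \<in> interior B - \<Lambda>}"
    using closed_Lambda by (intro open_orbit_preimage[OF flow]) auto
qed (use s u interior_subset in auto)

lemma bvp_solution_le:
  assumes s1: "bvp_solution u\<^sub>1" and s2: "bvp_solution u\<^sub>2" and x: "x \<in> B"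
  shows "u\<^sub>1 x \<le> u\<^sub>2 x"
proof (rule ccontr)
  assume "\<not> u\<^sub>1 x \<le> u\<^sub>2 x"
  have "continuous_on B (\<lambda>y. u\<^sub>1 y - u\<^sub>2 y)" using s1 s2 unfolding bvp_solution_def by (intro continuous_intros) auto
  then obtain m where m: "m \<in> B" and mx: "\<And>y. y \<in> B \<Longrightarrow> u\<^sub>1 y - u\<^sub>2 y \<le> u\<^sub>1 m - u\<^sub>2 m"
    using continuous_attains_sup[OF compact_B] x by blast
  have pos: "u\<^sub>1 m - u\<^sub>2 m > 0" using mx[OF x] \<open>\<not> u\<^sub>1 x \<le> u\<^sub>2 x\<close> by simp
  obtain u\<^sub>1' where d1: "\<forall>x\<in>D. has_lie_deriv \<Gamma> \<phi> D u\<^sub>1 x (u\<^sub>1' x)"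
    "\<forall>x\<in>D. has_lie_deriv \<Gamma> \<phi> D u\<^sub>1' x ((a x)\<^sup>2 * u\<^sub>1 x)"
    using s1 unfolding bvp_solution_def second_lie_deriv_eq_def by blast
  obtain u\<^sub>2' where d2: "\<forall>x\<in>D. has_lie_deriv \<Gamma> \<phi> D u\<^sub>2 x (u\<^sub>2' x)"
    "\<forall>x\<in>D. has_lie_deriv \<Gamma> \<phi> D u\<^sub>2' x ((a x)\<^sup>2 * u\<^sub>2 x)"
    using s2 unfolding bvp_solution_def second_lie_deriv_eq_def by blast
  have "m \<notin> \<Lambda>" "m \<notin> frontier B" using s1 s2 pos by (auto simp: bvp_solution_def)
  then have mW: "m \<in> interior B - \<Lambda>" using interior_B_if_not_frontier[OF m] by simp
  then have mD: "m \<in> D" using interior_subset by blast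
  define J where "J = {t. (t, m) \<in> \<Gamma> \<and> \<phi> t m \<in> interior B - \<Lambda>}"
  have "open J" unfolding J_def using closed_Lambda by (intro open_orbit_preimage[OF flow]) auto
  moreover have "0 \<in> J" using mW by (simp add: J_def)
  ultimately have J: "open J" "0 \<in> J" .
  note o1 = has_real_derivative_interior_orbit[where m = m, OF d1(1), folded J_def]
    and o1' = has_real_derivative_interior_orbit[where m = m, OF d1(2), folded J_def]
    and o2 = has_real_derivative_interior_orbit[where m = m, OF d2(1), folded J_def]
    and o2' = has_real_derivative_interior_orbit[where m = m, OF d2(2), folded J_def]
  show False
  proof (rule no_max_with_positive_second_deriv[OF J])
    show "((\<lambda>t. u\<^sub>1 (\<phi> t m) - u\<^sub>2 (\<phi> t m)) has_real_derivative u\<^sub>1' (\<phi> s m) - u\<^sub>2' (\<phi> s m)) (at s)"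
      if "s \<in> J" for s
      using o1[OF that] o2[OF that] by (rule derivative_intros)
    show "((\<lambda>t. u\<^sub>1' (\<phi> t m) - u\<^sub>2' (\<phi> t m)) has_real_derivative (a m)\<^sup>2 * (u\<^sub>1 m - u\<^sub>2 m)) (at 0)"
      using DERIV_diff[OF o1'[OF J(2)] o2'[OF J(2)]] by (simp add: algebra_simps)
    show "(a m)\<^sup>2 * (u\<^sub>1 m - u\<^sub>2 m) > 0" using a_pos[OF mD] pos by simp
    show "u\<^sub>1 (\<phi> s m) - u\<^sub>2 (\<phi> s m) \<le> u\<^sub>1 (\<phi> 0 m) - u\<^sub>2 (\<phi> 0 m)" if "s \<in> J" for s
      using mx that interior_subset by (auto simp: J_def)
  qed
qed

lemma bvp_solution_unique: "bvp_solution u\<^sub>1 \<Longrightarrow> bvp_solution u\<^sub>2 \<Longrightarrow> x \<in> B \<Longrightarrow> u\<^sub>1 x = u\<^sub>2 x"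
  using bvp_solution_le by (meson order_antisym)

end

theorem mainTheorem10:
  fixes \<Gamma> :: "(real \<times> 'a::metric_space) set"
    and \<phi> :: "real \<Rightarrow> 'a \<Rightarrow> 'a"
    and \<Lambda> N :: "'a set"
    and L1 a f :: "'a \<Rightarrow> real"
    and \<delta> :: real
  assumes flow: "partial_flow \<Gamma> \<phi>"
    and iso: "isolated_set \<Gamma> \<phi> \<Lambda>"
    and N: "isolating_nbhd \<Gamma> \<phi> \<Lambda> N"
    and cat: "catenary \<Gamma> \<phi> \<Lambda> N L1"
    and delta: "\<delta> > 0"
    and B_sub: "{x\<in>N. L1 x \<le> \<delta>} \<subseteq> interior N"
    and a_cont: "continuous_on ({x\<in>N. L1 x \<le> \<delta>} - \<Lambda>) a"
    and a_pos: "\<forall>x\<in>{x\<in>N. L1 x \<le> \<delta>} - \<Lambda>. a x > 0"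
    and a_dot: "\<forall>x\<in>{x\<in>N. L1 x \<le> \<delta>} - \<Lambda>. has_lie_deriv \<Gamma> \<phi> ({x\<in>N. L1 x \<le> \<delta>} - \<Lambda>) a x 0"
    and a_inf: "\<exists>c>0. \<forall>x\<in>{x\<in>N. L1 x \<le> \<delta>} - \<Lambda>. c \<le> a x"
    and f_cont: "continuous_on (frontier {x\<in>N. L1 x \<le> \<delta>}) f"
  shows "(\<exists>L2. (continuous_on {x\<in>N. L1 x \<le> \<delta>} L2 \<and>
                (\<forall>x\<in>\<Lambda>. L2 x = 0) \<and>
                second_lie_deriv_eq \<Gamma> \<phi> ({x\<in>N. L1 x \<le> \<delta>} - \<Lambda>) L2 (\<lambda>x. (a x)\<^sup>2 * L2 x) \<and>
                (\<forall>x\<in>frontier {x\<in>N. L1 x \<le> \<delta>}. L2 x = f x)) \<and>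
              (\<forall>L3. (continuous_on {x\<in>N. L1 x \<le> \<delta>} L3 \<and>
                (\<forall>x\<in>\<Lambda>. L3 x = 0) \<and>
                second_lie_deriv_eq \<Gamma> \<phi> ({x\<in>N. L1 x \<le> \<delta>} - \<Lambda>) L3 (\<lambda>x. (a x)\<^sup>2 * L3 x) \<and>
                (\<forall>x\<in>frontier {x\<in>N. L1 x \<le> \<delta>}. L3 x = f x))
                \<longrightarrow> (\<forall>x\<in>{x\<in>N. L1 x \<le> \<delta>}. L3 x = L2 x)))
       \<and> ((\<forall>x\<in>frontier {x\<in>N. L1 x \<le> \<delta>}. f x > 0) \<longrightarrow>
           (\<forall>L2. (continuous_on {x\<in>N. L1 x \<le> \<delta>} L2 \<and>
                (\<forall>x\<in>\<Lambda>. L2 x = 0) \<and>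
                second_lie_deriv_eq \<Gamma> \<phi> ({x\<in>N. L1 x \<le> \<delta>} - \<Lambda>) L2 (\<lambda>x. (a x)\<^sup>2 * L2 x) \<and>
                (\<forall>x\<in>frontier {x\<in>N. L1 x \<le> \<delta>}. L2 x = f x))
              \<longrightarrow> (\<forall>x\<in>{x\<in>N. L1 x \<le> \<delta>} - \<Lambda>. L2 x > 0)))"
proof -
  obtain L1' where L1': "\<forall>x\<in>N. has_lie_deriv \<Gamma> \<phi> N L1 x (L1' x)" "\<forall>x\<in>N. has_lie_deriv \<Gamma> \<phi> N L1' x (L1 x)"
    using cat unfolding catenary_def second_lie_deriv_eq_def by blast
  obtain c where c: "c > 0" "\<forall>x\<in>{x\<in>N. L1 x \<le> \<delta>} - \<Lambda>. c \<le> a x" using a_inf by blast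
  interpret catenary_bvp \<Gamma> \<phi> \<Lambda> N L1 L1' \<delta> a f c
    using flow iso cat L1' delta B_sub a_cont a_dot c f_cont
    by unfold_locales (auto simp: isolated_set_def catenary_def isolating_nbhd_def)
  have unique: "u x = L2 x" if "bvp_solution u" "x \<in> B" for u x
    using bvp_solution_unique[OF that(1) bvp_solution_L2 that(2)] .
  show ?thesis
    unfolding bvp_solution_def[symmetric]
  proof (intro conjI impI allI ballI exI[of _ L2])
    fix u x assume "\<forall>x\<in>frontier B. f x > 0" "bvp_solution u" "x \<in> D"
    then show "u x > 0" using unique[of u x] L2_pos[of x] by simp
  qed (use bvp_solution_L2 unique in auto)
qed

end
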